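(* Let $\lambda = (\lambda_1, \dots , \lambda_r)$ be a partition of $n$ with $\lambda_1\ge 1$, and let $\alpha = (\lambda_2,\dots,\lambda_r)$. Then $$f_{\lambda, n-\lambda_1}(q) = q^{\binom{n-\lambda_1+1}{2}}\, s_{\alpha^\prime}(1,q,\dots,q^{\lambda_1-1}),$$ where $\alpha'$ is the conjugate of $\alpha$. Equivalently, $$f_{\lambda, n-\lambda_1}(q) = q^{\binom{n-\lambda_1+1}{2}} \det\left( \begin{bmatrix} \lambda_1 \\ \lambda_i-i+j \end{bmatrix}_q q^{\binom{\lambda_i-i+j}{2}} \right)_{2 \leq i,j \leq r}.$$
   Context: For a partition $\lambda\vdash N$, a standard Young tableau of shape $\lambda$ is a filling of the Ferrers diagram with $1,\dots,N$, increasing along rows and down columns; it has a descent at $m$ if $m+1$ lies in a strictly lower row than $m$; $\mathrm{des}$ is the number of descents and $\mathrm{maj}$ their sum. $f_{\lambda,i}(q)=\sum q^{\mathrm{maj}(\tau)}$ over standard Young tableaux of shape $\lambda$ with $\mathrm{des}(\tau)=i$. (Note $n-\lambda_1$ is the maximum possible number of descents for shape $\lambda\vdash n$.) The conjugate $\alpha'$ of a partition $\alpha$ has $\alpha'_c$ equal to the number of parts of $\alpha$ that are $\ge c$. $s_\beta(x_1,\dots,x_m)=\sum_T x^T$ is the Schur polynomial, the sum over semistandard Young tableaux $T$ of shape $\beta$ with entries in $\{1,\dots,m\}$ (rows weakly increasing, columns strictly increasing), $x^T=\prod_a x_a^{\#\{a \text{ in } T\}}$. The $q$-binomial coefficient is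 $\frac{(q)_M}{(q)_N(q)_{M-N}}$ for integers $0\le N\le M$ and $0$ otherwise; $\binom{m}{2}=m(m-1)/2$ for all integers $m$. *)

theory Defs
  imports "HOL-Combinatorics.Permutations" "HOL-Computational_Algebra.Polynomial"
begin

text \<open>Partitions are lists of positive integers in weakly decreasing order;
  part number i (1-based) is lam ! (i-1).\<close>
definition is_partition :: "nat list \<Rightarrow> bool" where
  "is_partition lam \<longleftrightarrow> sorted (rev lam) \<and> 0 \<notin> set lam"

text \<open>Ferrers diagram: cells (row, column), 0-indexed.\<close>
definition cells :: "nat list \<Rightarrow> (nat \<times> nat) set" where
  "cells lam = {(i, j). i < length lam \<and> j < lam ! i}"

definition conj_part :: "nat list \<Rightarrow> nat list" where
  "conj_part xs = map (\<lambda>c. length (filter (\<lambda>x. c \<le> x) xs))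
      [1..<Suc (if xs = [] then 0 else Max (set xs))]"

definition syt :: "nat list \<Rightarrow> (nat \<times> nat \<Rightarrow> nat) set" where
  "syt lam = {T. bij_betw T (cells lam) {1..sum_list lam}
      \<and> (\<forall>c. c \<notin> cells lam \<longrightarrow> T c = 0)
      \<and> (\<forall>i j. (i, Suc j) \<in> cells lam \<longrightarrow> T (i, j) < T (i, Suc j))
      \<and> (\<forall>i j. (Suc i, j) \<in> cells lam \<longrightarrow> T (i, j) < T (Suc i, j))}"

definition row_of :: "nat list \<Rightarrow> (nat \<times> nat \<Rightarrow> nat) \<Rightarrow> nat \<Rightarrow> nat" where
  "row_of lam T m = fst (THE c. c \<in> cells lam \<and> T c = m)"

definition descents :: "nat list \<Rightarrow> (nat \<times> nat \<Rightarrow> nat) \<Rightarrow> nat set" where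
  "descents lam T = {m. 1 \<le> m \<and> m < sum_list lam \<and> row_of lam T m < row_of lam T (Suc m)}"

definition des :: "nat list \<Rightarrow> (nat \<times> nat \<Rightarrow> nat) \<Rightarrow> nat" where
  "des lam T = card (descents lam T)"

definition maj :: "nat list \<Rightarrow> (nat \<times> nat \<Rightarrow> nat) \<Rightarrow> nat" where
  "maj lam T = \<Sum> (descents lam T)"

definition fpoly :: "nat list \<Rightarrow> nat \<Rightarrow> rat poly" where
  "fpoly lam i = (\<Sum>T \<in> {T \<in> syt lam. des lam T = i}. monom 1 (maj lam T))"

definition ssyt :: "nat list \<Rightarrow> nat \<Rightarrow> (nat \<times> nat \<Rightarrow> nat) set" where
  "ssyt beta m = {T. (\<forall>c \<in> cells beta. T c \<in> {1..m})
      \<and> (\<forall>c. c \<notin> cells beta \<longrightarrow> T c = 0)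
      \<and> (\<forall>i j. (i, Suc j) \<in> cells beta \<longrightarrow> T (i, j) \<le> T (i, Suc j))
      \<and> (\<forall>i j. (Suc i, j) \<in> cells beta \<longrightarrow> T (i, j) < T (Suc i, j))}"

definition schur :: "nat list \<Rightarrow> nat \<Rightarrow> (nat \<Rightarrow> 'a::comm_ring_1) \<Rightarrow> 'a" where
  "schur beta m x = (\<Sum>T \<in> ssyt beta m. \<Prod>c \<in> cells beta. x (T c))"

definition qpoch :: "nat \<Rightarrow> rat poly" where
  "qpoch M = (\<Prod>k = 1..M. 1 - monom 1 k)"

definition qbinom :: "int \<Rightarrow> int \<Rightarrow> rat poly" where
  "qbinom M N = (if 0 \<le> N \<and> N \<le> M
     then qpoch (nat M) div (qpoch (nat N) * qpoch (nat (M - N))) else 0)"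

definition binom2 :: "int \<Rightarrow> nat" where
  "binom2 m = nat (m * (m - 1) div 2)"

end

theory Submission
  imports Defs
begin

text \<open>
  A descent at \<open>t\<close> sends \<open>t + 1\<close> out of the first row, so a standard tableau has at most
  \<open>n - \<lambda>\<^sub>1\<close> descents. In a tableau attaining this bound, the entries from the end of the first
  row on sit at the ends of strictly increasing rows; removing them yields a recursion for
  \<open>f\<^bsub>\<lambda>,n-\<lambda>\<^sub>1\<^esub>\<close> in \<open>\<lambda>\<^sub>1\<close>, summed over the admissible sets of such rows.

  Up to the factor \<open>q\<^bsup>(n-\<lambda>\<^sub>1+1 choose 2)\<^esup>\<close>, the same recursion holds for the generating
  function of fillings of rows \<open>2, \<dots>, r\<close> with entries at most \<open>\<lambda>\<^sub>1\<close>, strictly increasing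
  along rows and weakly down columns: remove the entries equal to the maximum, which sit at
  row ends. These fillings are the transposes of the semistandard tableaux of shape \<open>\<alpha>'\<close>,
  which gives the Schur polynomial. The dual Jacobi--Trudi determinant obeys the same recursion
  because its entries \<open>q\<^bsup>(k choose 2)\<^esup>[\<lambda>\<^sub>1 choose k]\<^sub>q\<close> satisfy the q-Pascal rule; the terms
  of its expansion that do not come from admissible row sets cancel.
\<close>

lemma chain_antimono:
  fixes f :: "nat \<Rightarrow> 'a::order"
  assumes step: "\<And>k. i \<le> k \<Longrightarrow> k < j \<Longrightarrow> f (Suc k) \<le> f k" and "i \<le> j"
  shows "f j \<le> f i"
  using \<open>i \<le> j\<close> step
proof (induction j rule: dec_induct)
  case (step j)
  then show ?case using order_trans by fastforce
qed simp

section \<open>Gaussian coefficients\<close>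

fun gauss_binom :: "nat \<Rightarrow> nat \<Rightarrow> rat poly" where
  "gauss_binom m 0 = 1"
| "gauss_binom 0 (Suc k) = 0"
| "gauss_binom (Suc m) (Suc k) = gauss_binom m (Suc k) + monom 1 (m - k) * gauss_binom m k"

lemma gauss_binom_eq_0: "m < k \<Longrightarrow> gauss_binom m k = 0"
proof (induction m arbitrary: k)
  case 0 then show ?case by (cases k) auto
next
  case (Suc m) then show ?case by (cases k) auto
qed

lemma qpoch_0: "qpoch 0 = 1"
  unfolding qpoch_def by simp

lemma qpoch_Suc: "qpoch (Suc j) = qpoch j * (1 - monom 1 (Suc j))"
  unfolding qpoch_def by (simp add: prod.atLeast1_atMost_eq prod.cl_ivl_Suc)

lemma qpoch_nonzero: "qpoch j \<noteq> 0"
proof -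
  have "1 - monom (1::rat) k \<noteq> 0" if "k \<ge> 1" for k
  proof
    assume "1 - monom (1::rat) k = 0"
    then have "coeff (1 - monom (1::rat) k) 0 = 0" by simp
    with that show False by (simp add: coeff_monom)
  qed
  then show ?thesis unfolding qpoch_def by (subst prod_zero_iff) auto
qed

lemma gauss_binom_mult_qpoch:
  "k \<le> m \<Longrightarrow> gauss_binom m k * qpoch k * qpoch (m - k) = qpoch m"
proof (induction m arbitrary: k)
  case 0 then show ?case by (simp add: qpoch_0)
next
  case (Suc m)
  show ?case
  proof (cases k)
    case 0 then show ?thesis by (simp add: qpoch_0)
  next
    case (Suc k')
    have k': "k' \<le> m" using Suc.prems Suc by simp
    have left: "gauss_binom m (Suc k') * qpoch (Suc k') * qpoch (m - k')
        = qpoch m * (1 - monom 1 (m - k'))"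
    proof (cases "k' = m")
      case True then show ?thesis by (simp add: gauss_binom_eq_0)
    next
      case False
      then have "Suc k' \<le> m" using k' by simp
      then have "m - k' = Suc (m - Suc k')" by simp
      then have "qpoch (m - k') = qpoch (m - Suc k') * (1 - monom 1 (m - k'))"
        by (simp add: qpoch_Suc)
      then show ?thesis using Suc.IH[OF \<open>Suc k' \<le> m\<close>] by (simp add: mult.assoc)
    qed
    have right: "gauss_binom m k' * qpoch k' * qpoch (m - k') = qpoch m"
      using Suc.IH k' by blast
    have "gauss_binom (Suc m) k * qpoch k * qpoch (Suc m - k)
        = gauss_binom m (Suc k') * qpoch (Suc k') * qpoch (m - k')
          + monom 1 (m - k') * (gauss_binom m k' * qpoch k' * qpoch (m - k'))
            * (1 - monom 1 (Suc k'))"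
      using Suc by (simp add: qpoch_Suc algebra_simps)
    also have "\<dots> = qpoch m * (1 - monom 1 (m - k'))
        + monom 1 (m - k') * qpoch m * (1 - monom 1 (Suc k'))"
      using left right by simp
    also have "\<dots> = qpoch m * (1 - monom 1 (Suc m))"
    proof -
      have "monom (1::rat) (m - k') * monom 1 (Suc k') = monom 1 (Suc m)"
        using k' by (simp add: mult_monom)
      then show ?thesis by (simp add: algebra_simps)
    qed
    also have "\<dots> = qpoch (Suc m)" by (simp add: qpoch_Suc)
    finally show ?thesis .
  qed
qed

lemma qbinom_eq_gauss_binom: "qbinom (int m) k = (if k < 0 then 0 else gauss_binom m (nat k))"
proof (cases "0 \<le> k \<and> k \<le> int m")
  case True
  then have "nat k \<le> m" by linarith
  have "qpoch m div (qpoch (nat k) * qpoch (m - nat k)) = gauss_binom m (nat k)"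
    using gauss_binom_mult_qpoch[OF \<open>nat k \<le> m\<close>] qpoch_nonzero
    by (metis mult.assoc nonzero_mult_div_cancel_right mult_eq_0_iff)
  moreover have "nat (int m - k) = m - nat k" using True by (simp add: nat_diff_distrib)
  ultimately show ?thesis using True unfolding qbinom_def by simp
next
  case False
  then show ?thesis unfolding qbinom_def by (auto simp: gauss_binom_eq_0)
qed

text \<open>By the q-binomial theorem, \<open>qelem m k\<close> is the elementary symmetric polynomial
  \<open>e\<^sub>k(1, q, \<dots>, q\<^sup>m\<^sup>-\<^sup>1)\<close>; only its q-Pascal recursion is used below.\<close>
definition qelem :: "nat \<Rightarrow> int \<Rightarrow> rat poly" where
  "qelem m k = qbinom (int m) k * monom 1 (binom2 k)"

lemma binom2_Suc: "binom2 (int (Suc k)) = binom2 (int k) + k"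
proof -
  have "int (Suc k) * (int (Suc k) - 1) div 2 = int k * (int k - 1) div 2 + int k"
    by (simp add: algebra_simps)
  moreover have "int k * (int k - 1) div 2 \<ge> 0"
    by (cases k) (auto simp: pos_imp_zdiv_nonneg_iff)
  ultimately show ?thesis unfolding binom2_def by simp
qed

lemma qelem_neg: "k < 0 \<Longrightarrow> qelem m k = 0"
  by (simp add: qelem_def qbinom_eq_gauss_binom)

lemma qelem_0: "qelem m 0 = 1"
  by (simp add: qelem_def qbinom_eq_gauss_binom binom2_def)

lemma qelem_empty: "qelem 0 k = (if k = 0 then 1 else 0)"
  by (auto simp: qelem_def qbinom_eq_gauss_binom[of 0, simplified] gauss_binom_eq_0 binom2_def)

lemma qelem_Suc: "qelem (Suc m) k = qelem m k + monom 1 m * qelem m (k - 1)"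
proof (cases "k \<le> 0")
  case True
  then show ?thesis
    by (cases "k = 0") (auto simp: qelem_0 qelem_neg)
next
  case False
  define k' where "k' = nat k - 1"
  have k: "k = int (Suc k')" and k1: "k - 1 = int k'" using False unfolding k'_def by simp_all
  have lhs: "qelem (Suc m) k = (gauss_binom m (Suc k') + monom 1 (m - k') * gauss_binom m k')
      * monom 1 (binom2 (int k') + k')"
    unfolding k qelem_def qbinom_eq_gauss_binom binom2_Suc nat_int by simp
  have rhs: "qelem m k + monom 1 m * qelem m (k - 1)
      = gauss_binom m (Suc k') * monom 1 (binom2 (int k') + k')
      + monom 1 m * (gauss_binom m k' * monom 1 (binom2 (int k')))"
    unfolding k1 unfolding k qelem_def qbinom_eq_gauss_binom binom2_Suc nat_int by simp
  show ?thesis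
  proof (cases "k' \<le> m")
    case True
    then have "monom (1::rat) (m - k') * monom 1 (binom2 (int k') + k')
        = monom 1 m * monom 1 (binom2 (int k'))"
      by (simp add: mult_monom)
    then show ?thesis unfolding lhs rhs by (simp add: algebra_simps)
  next
    case False
    then show ?thesis unfolding lhs rhs by (simp add: gauss_binom_eq_0)
  qed
qed

section \<open>The dual Jacobi--Trudi determinant\<close>

definition jt_det :: "nat \<Rightarrow> (nat \<Rightarrow> int) \<Rightarrow> nat \<Rightarrow> rat poly" where
  "jt_det r b m = (\<Sum>p | p permutes {2..r}. of_int (sign p) *
      (\<Prod>i\<in>{2..r}. qelem m (b i - int i + int (p i))))"

lemma jt_det_cong: "(\<And>i. i \<in> {2..r} \<Longrightarrow> b i = b' i) \<Longrightarrow> jt_det r b m = jt_det r b' m"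
  unfolding jt_det_def by (intro sum.cong refl arg_cong2[where f="(*)"] prod.cong) auto

lemma prod_qelem_Suc:
  fixes I :: "nat set" and k :: "nat \<Rightarrow> int"
  assumes "finite I"
  shows "(\<Prod>i\<in>I. qelem (Suc m) (k i)) =
    (\<Sum>R\<in>Pow I. monom 1 (m * card R) * (\<Prod>i\<in>I. qelem m (k i - (if i \<in> R then 1 else 0))))"
proof -
  have "(\<Prod>i\<in>I. qelem (Suc m) (k i)) = (\<Prod>i\<in>I. monom 1 m * qelem m (k i - 1) + qelem m (k i))"
    by (intro prod.cong refl) (simp add: qelem_Suc)
  also have "\<dots> = (\<Sum>R\<in>Pow I. (\<Prod>i\<in>R. monom 1 m * qelem m (k i - 1)) * (\<Prod>i\<in>I - R. qelem m (k i)))"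
    by (rule prod_add) (rule assms)
  also have "\<dots> = (\<Sum>R\<in>Pow I.
      monom 1 (m * card R) * (\<Prod>i\<in>I. qelem m (k i - (if i \<in> R then 1 else 0))))"
  proof (intro sum.cong refl)
    fix R assume "R \<in> Pow I"
    then have split: "(\<Prod>i\<in>I. qelem m (k i - (if i \<in> R then 1 else 0)))
        = (\<Prod>i\<in>I - R. qelem m (k i)) * (\<Prod>i\<in>R. qelem m (k i - 1))"
      using assms
        by (subst prod.subset_diff[of R]) (auto intro!: arg_cong2[where f="(*)"] prod.cong)
    show "(\<Prod>i\<in>R. monom 1 m * qelem m (k i - 1)) * (\<Prod>i\<in>I - R. qelem m (k i))
        = monom 1 (m * card R) * (\<Prod>i\<in>I. qelem m (k i - (if i \<in> R then 1 else 0)))"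
      unfolding split by (simp add: prod.distrib monom_power mult.commute algebra_simps)
  qed
  finally show ?thesis .
qed

lemma jt_det_Suc: "jt_det r b (Suc m) = (\<Sum>R\<in>Pow {2..r}. monom 1 (m * card R) *
     jt_det r (\<lambda>i. b i - (if i \<in> R then 1 else 0)) m)"
proof -
  let ?I = "{2..r}"
  let ?t = "\<lambda>R p. \<Prod>i\<in>?I. qelem m (b i - (if i \<in> R then 1 else 0) - int i + int (p i))"
  have "jt_det r b (Suc m) = (\<Sum>p | p permutes ?I. \<Sum>R\<in>Pow ?I.
      of_int (sign p) * (monom 1 (m * card R) * ?t R p))"
    unfolding jt_det_def prod_qelem_Suc[OF finite_atLeastAtMost]
    by (simp add: sum_distrib_left algebra_simps)
  also have "\<dots> = (\<Sum>R\<in>Pow ?I. \<Sum>p | p permutes ?I. monom 1 (m * card R) * (of_int (sign p) * ?t R p))"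
    by (subst sum.swap) (simp add: algebra_simps)
  also have "\<dots> = (\<Sum>R\<in>Pow ?I.
      monom 1 (m * card R) * jt_det r (\<lambda>i. b i - (if i \<in> R then 1 else 0)) m)"
    unfolding jt_det_def by (simp add: sum_distrib_left)
  finally show ?thesis .
qed

text \<open>Two rows with \<open>b i - i = b j - j\<close> coincide.\<close>
lemma jt_det_eq_0_if_equal_rows:
  assumes i: "i \<in> {2..r}" and j: "j \<in> {2..r}" and "i \<noteq> j"
    and eq: "b i - int i = b j - int j"
  shows "jt_det r b m = 0"
proof -
  let ?I = "{2..r}"
  let ?t = "Transposition.transpose i j"
  define f where "f p = of_int (sign p) * (\<Prod>k\<in>?I. qelem m (b k - int k + int (p k)))" for p
  have tp: "?t permutes ?I" using i j by (rule permutes_swap_id)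
  have odd: "f (p \<circ> ?t) = - f p" if p: "p permutes ?I" for p
  proof -
    have "(\<Prod>k\<in>?I. qelem m (b k - int k + int ((p \<circ> ?t) k))) =
        (\<Prod>k\<in>?I. qelem m (b (?t k) - int (?t k) + int (p (?t k))))"
      using eq by (intro prod.cong refl) (auto simp: transpose_def)
    also have "\<dots> = (\<Prod>k\<in>?I. qelem m (b k - int k + int (p k)))"
      using prod.reindex_bij_betw[OF permutes_imp_bij[OF tp]] by simp
    moreover have "sign (p \<circ> ?t) = - sign p"
      using sign_compose[OF permutation_permutes[THEN iffD2] permutation_permutes[THEN iffD2]]
        sign_swap_id[of i j] \<open>i \<noteq> j\<close> p tp
      by (metis finite_atLeastAtMost mult_minus1_right)
    ultimately show ?thesis unfolding f_def by simp
  qed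
  have bij: "bij_betw (\<lambda>p. p \<circ> ?t) {p. p permutes ?I} {p. p permutes ?I}"
    by (rule bij_betw_byWitness[where f'="\<lambda>p. p \<circ> ?t"])
      (auto simp: comp_assoc intro: permutes_compose[OF tp])
  have "jt_det r b m = sum f {p. p permutes ?I}" unfolding jt_det_def f_def by simp
  also have "\<dots> = sum (\<lambda>p. f (p \<circ> ?t)) {p. p permutes ?I}"
    using sum.reindex_bij_betw[OF bij, of f] by simp
  also have "\<dots> = - sum f {p. p permutes ?I}"
    using odd by (simp add: sum_negf)
  finally show ?thesis unfolding jt_det_def f_def by simp
qed

lemma jt_det_eq_0_if_last_neg:
  assumes "2 \<le> r" and "b r < 0"
  shows "jt_det r b m = 0"
proof -
  have "(\<Prod>i\<in>{2..r}. qelem m (b i - int i + int (p i))) = 0" if "p permutes {2..r}" for p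
  proof -
    have "p r \<in> {2..r}" using that assms(1) permutes_in_image by fastforce
    then have "qelem m (b r - int r + int (p r)) = 0" using assms(2) by (intro qelem_neg) auto
    then show ?thesis using assms(1) by (intro prod_zero) auto
  qed
  then show ?thesis unfolding jt_det_def by (intro sum.neutral) auto
qed

lemma jt_det_0:
  assumes "\<And>i. i \<in> {2..r} \<Longrightarrow> b i \<le> b 2" and "\<And>i. i \<in> {2..r} \<Longrightarrow> 0 \<le> b i"
  shows "jt_det r b 0 = (if \<forall>i\<in>{2..r}. b i = 0 then 1 else 0)"
proof (cases "\<forall>i\<in>{2..r}. b i = 0")
  case True
  have "of_int (sign p) * (\<Prod>i\<in>{2..r}. qelem 0 (b i - int i + int (p i)))
      = (if p = id then 1 else 0)"
    if p: "p permutes {2..r}" for p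
  proof (cases "p = id")
    case False
    then obtain i where "p i \<noteq> i" by (metis eq_id_iff)
    then have "i \<in> {2..r}" using p by (meson permutes_not_in)
    then have "(\<Prod>i\<in>{2..r}. qelem 0 (b i - int i + int (p i))) = 0"
      using True \<open>p i \<noteq> i\<close> by (intro prod_zero) (auto simp: qelem_empty)
    then show ?thesis using False by simp
  qed (use True in \<open>simp add: qelem_empty sign_id\<close>)
  then have "jt_det r b 0 = (\<Sum>p | p permutes {2..r}. if p = id then 1 else 0)"
    unfolding jt_det_def by (intro sum.cong) auto
  also have "\<dots> = 1"
    using finite_permutations[of "{2..r}"] permutes_id[of "{2..r}"] by (simp add: sum.delta')
  finally show ?thesis using True by simp
next
  case False
  then obtain i where "i \<in> {2..r}" "b i \<noteq> 0" by auto
  then have "b 2 > 0" "2 \<in> {2..r}" using assms[of i] by auto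
  have "(\<Prod>i\<in>{2..r}. qelem 0 (b i - int i + int (p i))) = 0" if "p permutes {2..r}" for p
  proof -
    have "p 2 \<in> {2..r}" using that \<open>2 \<in> {2..r}\<close> permutes_in_image by fastforce
    then have "qelem 0 (b 2 - int 2 + int (p 2)) = 0" using \<open>b 2 > 0\<close> by (simp add: qelem_empty)
    then show ?thesis using \<open>2 \<in> {2..r}\<close> by (intro prod_zero) (auto intro!: bexI[of _ 2])
  qed
  then show ?thesis unfolding jt_det_def using False by (auto intro: sum.neutral)
qed
section \<open>Fillings of the tail of a shape\<close>

definition decr_parts :: "nat list \<Rightarrow> nat set \<Rightarrow> nat list" where
  "decr_parts lam A = map (\<lambda>i. lam ! i - (if i \<in> A then 1 else 0)) [0..<length lam]"

lemma length_decr_parts[simp]: "length (decr_parts lam A) = length lam"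
  by (simp add: decr_parts_def)

lemma nth_decr_parts[simp]: "i < length lam \<Longrightarrow>
  decr_parts lam A ! i = lam ! i - (if i \<in> A then 1 else 0)"
  by (simp add: decr_parts_def)

definition tail_nonincreasing :: "nat list \<Rightarrow> bool" where
  "tail_nonincreasing lam \<longleftrightarrow> (\<forall>i. 1 \<le> i \<longrightarrow> Suc i < length lam \<longrightarrow> lam ! Suc i \<le> lam ! i)"

definition tail_cells :: "nat list \<Rightarrow> (nat \<times> nat) set" where
  "tail_cells lam = {(i, j). 1 \<le> i \<and> i < length lam \<and> j < lam ! i}"

text \<open>Row \<open>i \<ge> 1\<close> of \<open>lam\<close> is column \<open>i - 1\<close> of the shape \<open>conj_part (tl lam)\<close>:
  tail fillings are the transposes of semistandard tableaux of that shape, so rows increase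
  strictly and columns weakly; row 0 is ignored to keep the row indices of \<open>lam\<close>.\<close>
definition tail_fillings :: "nat list \<Rightarrow> nat \<Rightarrow> (nat \<times> nat \<Rightarrow> nat) set" where
  "tail_fillings lam m = {U. (\<forall>c\<in>tail_cells lam. U c \<in> {1..m})
      \<and> (\<forall>c. c \<notin> tail_cells lam \<longrightarrow> U c = 0)
      \<and> (\<forall>i j. (i, Suc j) \<in> tail_cells lam \<longrightarrow> U (i, j) < U (i, Suc j))
      \<and> (\<forall>i j. (Suc i, j) \<in> tail_cells lam \<longrightarrow> 1 \<le> i \<longrightarrow> U (i, j) \<le> U (Suc i, j))}"

definition tail_gf :: "nat list \<Rightarrow> nat \<Rightarrow> rat poly" where
  "tail_gf lam m = (\<Sum>U\<in>tail_fillings lam m. \<Prod>c\<in>tail_cells lam. monom 1 (U c - 1))"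

text \<open>The possible sets of rows containing the largest entry of a tail filling; that entry
  can only sit at the end of a row.\<close>
definition tail_strips :: "nat list \<Rightarrow> nat set set" where
  "tail_strips lam = {R. R \<subseteq> {1..<length lam} \<and> (\<forall>i\<in>R. 0 < lam ! i)
      \<and> tail_nonincreasing (decr_parts lam R)}"

lemma finite_tail_cells: "finite (tail_cells lam)"
proof -
  have "tail_cells lam = (SIGMA i:{1..<length lam}. {..<lam!i})"
    unfolding tail_cells_def by auto
  then show ?thesis by simp
qed

lemma finite_tail_fillings: "finite (tail_fillings lam m)"
proof -
  have "tail_fillings lam m \<subseteq>
      {f. \<forall>x. (x \<in> tail_cells lam \<longrightarrow> f x \<in> {1..m}) \<and> (x \<notin> tail_cells lam \<longrightarrow> f x = 0)}"
    unfolding tail_fillings_def by auto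
  then show ?thesis
    by (rule finite_subset) (intro finite_set_of_finite_funs finite_tail_cells; simp)
qed

lemma finite_tail_strips: "finite (tail_strips lam)"
  unfolding tail_strips_def by (rule finite_subset[of _ "Pow {1..<length lam}"]) auto

lemma tail_gf_cong: "tail_cells lam1 = tail_cells lam2 \<Longrightarrow> tail_gf lam1 m = tail_gf lam2 m"
  unfolding tail_gf_def tail_fillings_def by simp

lemma tail_fillings_zero: "U \<in> tail_fillings lam m \<Longrightarrow> c \<notin> tail_cells lam \<Longrightarrow> U c = 0"
  unfolding tail_fillings_def by blast

lemma tail_fillings_row_ge: "U \<in> tail_fillings lam m \<Longrightarrow> (i, j) \<in> tail_cells lam \<Longrightarrow> Suc j \<le> U (i, j)"
proof (induction j)
  case 0 then show ?case unfolding tail_fillings_def by force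
next
  case (Suc j)
  have "(i, j) \<in> tail_cells lam" using Suc.prems(2) unfolding tail_cells_def by auto
  then have "Suc j \<le> U (i, j)" using Suc by blast
  moreover have "U (i, j) < U (i, Suc j)" using Suc.prems unfolding tail_fillings_def by blast
  ultimately show ?case by simp
qed

lemma tail_gf_eq_0:
  assumes "Suc 0 < length lam" and "m < lam ! 1"
  shows "tail_gf lam m = 0"
proof -
  have "tail_fillings lam m = {}"
  proof (rule ccontr)
    assume "tail_fillings lam m \<noteq> {}"
    then obtain U where U: "U \<in> tail_fillings lam m" by auto
    have c: "(1, lam ! 1 - 1) \<in> tail_cells lam" using assms unfolding tail_cells_def by auto
    have "lam ! 1 \<le> U (1, lam ! 1 - 1)" using tail_fillings_row_ge[OF U c] assms by simp
    moreover have "U (1, lam ! 1 - 1) \<le> m" using U c unfolding tail_fillings_def by auto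
    ultimately show False using assms by simp
  qed
  then show ?thesis unfolding tail_gf_def by simp
qed

lemma tail_gf_0: "tail_gf lam 0 = (if tail_cells lam = {} then 1 else 0)"
proof (cases "tail_cells lam = {}")
  case True
  have "tail_fillings lam 0 = {\<lambda>_. 0}" unfolding tail_fillings_def True by auto
  then show ?thesis unfolding tail_gf_def using True by simp
next
  case False
  have "tail_fillings lam 0 = {}" using False unfolding tail_fillings_def by auto
  then show ?thesis unfolding tail_gf_def using False by simp
qed

lemma tail_cells_decr_parts:
  assumes "R \<subseteq> {1..<length lam}" "\<forall>i\<in>R. 0 < lam ! i"
  shows "tail_cells (decr_parts lam R) = tail_cells lam - (\<lambda>i. (i, lam ! i - 1)) ` R"
  using assms unfolding tail_cells_def by (auto split: if_splits)

lemma row_ends_subset_tail_cells: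
  assumes "R \<subseteq> {1..<length lam}" "\<forall>i\<in>R. 0 < lam ! i"
  shows "(\<lambda>i. (i, lam ! i - 1)) ` R \<subseteq> tail_cells lam"
  using assms unfolding tail_cells_def by auto

context
  fixes lam :: "nat list" and m :: nat
  assumes tail_noninc: "tail_nonincreasing lam"
begin

definition top_rows :: "(nat \<times> nat \<Rightarrow> nat) \<Rightarrow> nat set" where
  "top_rows U = {i \<in> {1..<length lam}. 0 < lam ! i \<and> U (i, lam ! i - 1) = Suc m}"

definition restrict_filling :: "nat set \<Rightarrow> (nat \<times> nat \<Rightarrow> nat) \<Rightarrow> nat \<times> nat \<Rightarrow> nat" where
  "restrict_filling R U = (\<lambda>c. if c \<in> tail_cells (decr_parts lam R) then U c else 0)"

definition extend_filling :: "nat set \<Rightarrow> (nat \<times> nat \<Rightarrow> nat) \<Rightarrow> nat \<times> nat \<Rightarrow> nat" where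
  "extend_filling R U = (\<lambda>c. if c \<in> tail_cells (decr_parts lam R) then U c
      else if c \<in> tail_cells lam then Suc m else 0)"

lemma top_rows_subset: "top_rows U \<subseteq> {1..<length lam}" "\<forall>i\<in>top_rows U. 0 < lam ! i"
  unfolding top_rows_def by auto

lemma tail_cells_decr_top_rows:
  "tail_cells (decr_parts lam (top_rows U)) = tail_cells lam - (\<lambda>i. (i, lam ! i - 1)) ` top_rows U"
  by (rule tail_cells_decr_parts[OF top_rows_subset])

lemma top_entry_at_row_end:
  assumes U: "U \<in> tail_fillings lam (Suc m)" and c: "(i, j) \<in> tail_cells lam" and "U (i, j) = Suc m"
  shows "j = lam ! i - 1"
proof (rule ccontr)
  assume "j \<noteq> lam ! i - 1"
  then have c2: "(i, Suc j) \<in> tail_cells lam" using c unfolding tail_cells_def by auto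
  then have "U (i, j) < U (i, Suc j)" using U unfolding tail_fillings_def by blast
  moreover have "U (i, Suc j) \<le> Suc m" using U c2 unfolding tail_fillings_def by auto
  ultimately show False using \<open>U (i, j) = Suc m\<close> by simp
qed

lemma top_rows_in_tail_strips:
  assumes U: "U \<in> tail_fillings lam (Suc m)"
  shows "top_rows U \<in> tail_strips lam"
proof -
  let ?R = "top_rows U"
  have "decr_parts lam ?R ! Suc i \<le> decr_parts lam ?R ! i"
    if i1: "1 \<le> i" and i2: "Suc i < length lam" for i
  proof (rule ccontr)
    assume "\<not> ?thesis"
    moreover have "lam ! Suc i \<le> lam ! i"
      using tail_noninc i1 i2 unfolding tail_nonincreasing_def by simp
    ultimately have A: "lam ! Suc i = lam ! i" "i \<in> ?R" "Suc i \<notin> ?R" using i2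
      by (auto split: if_splits)
    then have top: "U (i, lam ! i - 1) = Suc m" and "0 < lam ! i" unfolding top_rows_def by auto
    have c2: "(Suc i, lam ! i - 1) \<in> tail_cells lam"
      using A \<open>0 < lam ! i\<close> i2 unfolding tail_cells_def by auto
    then have "U (i, lam ! i - 1) \<le> U (Suc i, lam ! i - 1)"
      using U i1 unfolding tail_fillings_def by blast
    moreover have "U (Suc i, lam ! i - 1) \<le> Suc m" using U c2 unfolding tail_fillings_def by auto
    ultimately have "U (Suc i, lam ! Suc i - 1) = Suc m" using top A by simp
    then have "Suc i \<in> ?R" using i2 A \<open>0 < lam ! i\<close> unfolding top_rows_def by auto
    with A show False by simp
  qed
  then show ?thesis unfolding tail_strips_def tail_nonincreasing_def using top_rows_subset by auto
qed

lemma tail_filling_range_below_top: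
  assumes U: "U \<in> tail_fillings lam (Suc m)" and c: "c \<in> tail_cells (decr_parts lam (top_rows U))"
  shows "U c \<in> {1..m}"
proof -
  obtain i j where cij: "c = (i, j)" by force
  have c1: "c \<in> tail_cells lam" using c tail_cells_decr_top_rows by auto
  then have "U c \<in> {1..Suc m}" using U unfolding tail_fillings_def by auto
  moreover have "U c \<noteq> Suc m"
  proof
    assume "U c = Suc m"
    then have "j = lam ! i - 1" using top_entry_at_row_end[OF U] c1 cij by auto
    moreover have "0 < lam ! i" "1 \<le> i" "i < length lam"
      using c1 cij unfolding tail_cells_def by auto
    ultimately have "i \<in> top_rows U" using \<open>U c = Suc m\<close> cij unfolding top_rows_def by auto
    then show False using c tail_cells_decr_top_rows cij \<open>j = lam ! i - 1\<close> by auto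
  qed
  ultimately show ?thesis by auto
qed

lemma restrict_filling_in_tail_fillings:
  assumes U: "U \<in> tail_fillings lam (Suc m)"
  shows "restrict_filling (top_rows U) U \<in> tail_fillings (decr_parts lam (top_rows U)) m"
proof -
  let ?R = "top_rows U"
  let ?cells = "tail_cells (decr_parts lam ?R)"
  note cd = tail_cells_decr_top_rows[of U]
  have noninc: "tail_nonincreasing (decr_parts lam ?R)"
    using top_rows_in_tail_strips[OF U] unfolding tail_strips_def by auto
  show ?thesis unfolding tail_fillings_def
  proof (intro CollectI conjI allI impI ballI)
    fix c assume "c \<in> ?cells"
    then show "restrict_filling ?R U c \<in> {1..m}"
      using tail_filling_range_below_top[OF U] unfolding restrict_filling_def by auto
  next
    fix c assume "c \<notin> ?cells"
    then show "restrict_filling ?R U c = 0" unfolding restrict_filling_def by auto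
  next
    fix i j assume a: "(i, Suc j) \<in> ?cells"
    then have "(i, j) \<in> ?cells" unfolding tail_cells_def by auto
    moreover have "U (i, j) < U (i, Suc j)" using a cd U unfolding tail_fillings_def by blast
    ultimately show "restrict_filling ?R U (i, j) < restrict_filling ?R U (i, Suc j)"
      using a unfolding restrict_filling_def by simp
  next
    fix i j assume a: "(Suc i, j) \<in> ?cells" and i1: "1 \<le> i"
    then have "(i, j) \<in> ?cells" using noninc unfolding tail_cells_def tail_nonincreasing_def
      by (auto simp del: nth_decr_parts)
    moreover have "U (i, j) \<le> U (Suc i, j)" using a cd U i1 unfolding tail_fillings_def by blast
    ultimately show "restrict_filling ?R U (i, j) \<le> restrict_filling ?R U (Suc i, j)"
      using a unfolding restrict_filling_def by simp
  qed
qed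

lemma extend_restrict_filling:
  assumes U: "U \<in> tail_fillings lam (Suc m)"
  shows "extend_filling (top_rows U) (restrict_filling (top_rows U) U) = U"
proof
  fix c
  let ?R = "top_rows U"
  show "extend_filling ?R (restrict_filling ?R U) c = U c"
  proof (cases "c \<in> tail_cells lam")
    case True
    then show ?thesis using tail_cells_decr_top_rows[of U]
      unfolding extend_filling_def restrict_filling_def top_rows_def by auto
  next
    case False
    then show ?thesis using tail_fillings_zero[OF U False] tail_cells_decr_top_rows[of U]
      unfolding extend_filling_def by auto
  qed
qed

context
  fixes R :: "nat set" and U' :: "nat \<times> nat \<Rightarrow> nat"
  assumes R: "R \<in> tail_strips lam" and U': "U' \<in> tail_fillings (decr_parts lam R) m"
begin

lemma tail_strip_props:
  "R \<subseteq> {1..<length lam}" "\<forall>i\<in>R. 0 < lam ! i" "tail_nonincreasing (decr_parts lam R)"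
  using R unfolding tail_strips_def by auto

lemma tail_cells_decr_strip:
  "tail_cells (decr_parts lam R) = tail_cells lam - (\<lambda>i. (i, lam ! i - 1)) ` R"
  by (rule tail_cells_decr_parts[OF tail_strip_props(1,2)])

lemma extend_filling_old:
  "c \<in> tail_cells (decr_parts lam R) \<Longrightarrow> extend_filling R U' c = U' c \<and> U' c \<in> {1..m}"
  using U' unfolding extend_filling_def tail_fillings_def by simp

lemma extend_filling_new:
  "c \<in> tail_cells lam \<Longrightarrow> c \<notin> tail_cells (decr_parts lam R) \<Longrightarrow> extend_filling R U' c = Suc m"
  unfolding extend_filling_def by simp

lemma extend_filling_col_mono:
  assumes a: "(Suc i, j) \<in> tail_cells lam" and i1: "1 \<le> i"
  shows "extend_filling R U' (i, j) \<le> extend_filling R U' (Suc i, j)"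
proof -
  have ij: "(i, j) \<in> tail_cells lam"
    using a i1 tail_noninc unfolding tail_cells_def tail_nonincreasing_def
    by auto
  show ?thesis
  proof (cases "(i, j) \<in> tail_cells (decr_parts lam R)")
    case True
    then show ?thesis using U' i1 extend_filling_old extend_filling_new[OF a]
      unfolding tail_fillings_def by (cases "(Suc i, j) \<in> tail_cells (decr_parts lam R)") auto
  next
    case False
    then have iR: "i \<in> R" and j: "j = lam ! i - 1" using ij tail_cells_decr_strip by auto
    have ltl: "Suc i < length lam" and "j < lam ! Suc i" using a unfolding tail_cells_def by auto
    moreover have "lam ! Suc i \<le> lam ! i"
      using tail_noninc i1 ltl unfolding tail_nonincreasing_def by simp
    ultimately have eqlen: "lam ! Suc i = lam ! i" using tail_strip_props(2) iR j by fastforce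
    have "Suc i \<in> R"
    proof (rule ccontr)
      assume "Suc i \<notin> R"
      then have "decr_parts lam R ! i < decr_parts lam R ! Suc i"
        using iR eqlen ltl tail_strip_props(2) by auto
      then show False using tail_strip_props(3) i1 ltl unfolding tail_nonincreasing_def by fastforce
    qed
    then have "(Suc i, j) \<notin> tail_cells (decr_parts lam R)"
      using tail_cells_decr_strip j eqlen by auto
    then show ?thesis using extend_filling_new[OF a] extend_filling_new[OF ij False] by simp
  qed
qed

lemma extend_filling_in_tail_fillings: "extend_filling R U' \<in> tail_fillings lam (Suc m)"
  unfolding tail_fillings_def
proof (intro CollectI conjI allI impI ballI extend_filling_col_mono)
  fix c assume "c \<in> tail_cells lam"
  then show "extend_filling R U' c \<in> {1..Suc m}"
    using extend_filling_old[of c] extend_filling_new[of c]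
    by (cases "c \<in> tail_cells (decr_parts lam R)") auto
next
  fix c assume "c \<notin> tail_cells lam"
  then show "extend_filling R U' c = 0"
    using tail_cells_decr_strip unfolding extend_filling_def by auto
next
  fix i j assume a: "(i, Suc j) \<in> tail_cells lam"
  then have "(i, j) \<in> tail_cells (decr_parts lam R)"
    using tail_cells_decr_strip unfolding tail_cells_def by auto
  then show "extend_filling R U' (i, j) < extend_filling R U' (i, Suc j)"
    using U' a extend_filling_old extend_filling_new[OF a] unfolding tail_fillings_def
    by (cases "(i, Suc j) \<in> tail_cells (decr_parts lam R)") fastforce+
qed

lemma top_rows_extend_filling: "top_rows (extend_filling R U') = R"
proof (intro equalityI subsetI)
  fix i assume "i \<in> top_rows (extend_filling R U')"
  then have i: "i \<in> {1..<length lam}" "0 < lam ! i" "extend_filling R U' (i, lam ! i - 1) = Suc m"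
    unfolding top_rows_def by auto
  show "i \<in> R"
  proof (rule ccontr)
    assume "i \<notin> R"
    then have "(i, lam ! i - 1) \<in> tail_cells (decr_parts lam R)"
      using i unfolding tail_cells_def by auto
    then show False using i extend_filling_old by fastforce
  qed
next
  fix i assume "i \<in> R"
  then show "i \<in> top_rows (extend_filling R U')"
    using extend_filling_new row_ends_subset_tail_cells[OF tail_strip_props(1,2)]
      tail_cells_decr_strip tail_strip_props
    unfolding top_rows_def by auto
qed

lemma restrict_extend_filling: "restrict_filling R (extend_filling R U') = U'"
  using tail_fillings_zero[OF U'] unfolding restrict_filling_def extend_filling_def by auto

end

lemma restrict_filling_bij:
  assumes "R \<in> tail_strips lam"
  shows "bij_betw (restrict_filling R) {U \<in> tail_fillings lam (Suc m). top_rows U = R}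
    (tail_fillings (decr_parts lam R) m)"
  by (rule bij_betw_byWitness[where f'="extend_filling R"])
    (use assms extend_restrict_filling restrict_filling_in_tail_fillings
      extend_filling_in_tail_fillings
      top_rows_extend_filling restrict_extend_filling in auto)

text \<open>All top rows carry the entry \<open>m + 1\<close>, contributing \<open>q\<^sup>m\<close> each.\<close>
lemma filling_weight_split:
  assumes U: "U \<in> tail_fillings lam (Suc m)"
  shows "(\<Prod>c\<in>tail_cells lam. monom (1::rat) (U c - 1)) = monom 1 (m * card (top_rows U)) *
    (\<Prod>c\<in>tail_cells (decr_parts lam (top_rows U)). monom 1 (restrict_filling (top_rows U) U c - 1))"
proof -
  let ?R = "top_rows U"
  let ?L = "(\<lambda>i. (i, lam ! i - 1)) ` ?R"
  let ?C = "tail_cells (decr_parts lam ?R)"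
  have "finite ?L" using top_rows_subset(1) finite_subset[of ?R "{1..<length lam}"] by auto
  moreover have "tail_cells lam = ?C \<union> ?L" "?C \<inter> ?L = {}"
    using tail_cells_decr_top_rows[of U] row_ends_subset_tail_cells[OF top_rows_subset] by auto
  ultimately have "(\<Prod>c\<in>tail_cells lam. monom (1::rat) (U c - 1)) =
      (\<Prod>c\<in>?C. monom 1 (U c - 1)) * (\<Prod>c\<in>?L. monom 1 (U c - 1))"
    using prod.union_disjoint[OF finite_tail_cells] by simp
  moreover have "(\<Prod>c\<in>?C. monom (1::rat) (U c - 1)) = (\<Prod>c\<in>?C. monom 1 (restrict_filling ?R U c - 1))"
    unfolding restrict_filling_def by (intro prod.cong) auto
  moreover have "(\<Prod>c\<in>?L. monom (1::rat) (U c - 1)) = (\<Prod>c\<in>?L. monom 1 m)"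
    unfolding top_rows_def by (intro prod.cong) auto
  moreover have "card ?L = card ?R" by (rule card_image) (auto simp: inj_on_def)
  ultimately show ?thesis by (simp add: monom_power mult.commute)
qed

lemma tail_gf_Suc:
  "tail_gf lam (Suc m) = (\<Sum>R\<in>tail_strips lam. monom 1 (m * card R) * tail_gf (decr_parts lam R) m)"
proof -
  let ?w = "\<lambda>C U. \<Prod>c\<in>C. monom (1::rat) (U c - 1)"
  have "tail_gf lam (Suc m) = (\<Sum>R\<in>tail_strips lam.
      \<Sum>U\<in>{U \<in> tail_fillings lam (Suc m). top_rows U = R}. ?w (tail_cells lam) U)"
    unfolding tail_gf_def
    by (rule sum.group[symmetric])
      (auto simp: finite_tail_fillings finite_tail_strips top_rows_in_tail_strips)
  also have "\<dots> = (\<Sum>R\<in>tail_strips lam. monom 1 (m * card R) * tail_gf (decr_parts lam R) m)"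
  proof (intro sum.cong refl)
    fix R assume R: "R \<in> tail_strips lam"
    let ?C = "tail_cells (decr_parts lam R)"
    have "(\<Sum>U\<in>{U \<in> tail_fillings lam (Suc m). top_rows U = R}. ?w (tail_cells lam) U) =
        monom 1 (m * card R) * (\<Sum>U\<in>{U \<in> tail_fillings lam (Suc m). top_rows U = R}.
          ?w ?C (restrict_filling R U))"
      unfolding sum_distrib_left by (intro sum.cong refl) (use filling_weight_split in auto)
    also have "\<dots> = monom 1 (m * card R) * tail_gf (decr_parts lam R) m"
      unfolding tail_gf_def using sum.reindex_bij_betw[OF restrict_filling_bij[OF R], of "?w ?C"]
        by simp
    finally show "(\<Sum>U\<in>{U \<in> tail_fillings lam (Suc m). top_rows U = R}. ?w (tail_cells lam) U) =
        monom 1 (m * card R) * tail_gf (decr_parts lam R) m" .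
  qed
  finally show ?thesis .
qed

end

section \<open>The tail generating function as a determinant\<close>

text \<open>Parts are indexed from 1 here, as in the paper.\<close>
definition part :: "nat list \<Rightarrow> nat \<Rightarrow> int" where
  "part lam i = int (lam ! (i - 1))"

lemma tail_nonincreasing_nth_mono:
  "tail_nonincreasing lam \<Longrightarrow> 1 \<le> i \<Longrightarrow> i \<le> j \<Longrightarrow> j < length lam \<Longrightarrow> lam ! j \<le> lam ! i"
  by (rule chain_antimono[where f="nth lam"]) (auto simp: tail_nonincreasing_def)

text \<open>The terms of the determinant recursion that do not correspond to tail strips cancel:
  the decremented parts either produce two equal rows or a negative last row.\<close>
lemma jt_det_eq_0_unless_strip:
  assumes noninc: "tail_nonincreasing lam" and R: "R \<subseteq> {1..<length lam}" and "R \<notin> tail_strips lam"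
  shows "jt_det (length lam) (\<lambda>i. part lam i - (if i - 1 \<in> R then 1 else 0)) m = 0"
proof -
  let ?r = "length lam"
  define c where "c = (\<lambda>i. part lam i - (if i - 1 \<in> R then 1 else 0))"
  show ?thesis unfolding c_def[symmetric]
  proof (cases "\<exists>i. 2 \<le> i \<and> i < ?r \<and> c i < c (Suc i)")
    case True
    then obtain i where i: "2 \<le> i" "i < ?r" "c i < c (Suc i)" by auto
    have "lam ! i \<le> lam ! (i - 1)"
      using tail_nonincreasing_nth_mono[OF noninc, of "i - 1" i] i by simp
    then have "c i - int i = c (Suc i) - int (Suc i)"
      using i(3) unfolding c_def part_def by (auto split: if_splits)
    then show "jt_det ?r c m = 0" using i by (intro jt_det_eq_0_if_equal_rows[of i _ "Suc i"]) auto
  next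
    case False
    then have c_mono: "c (Suc k) \<le> c k" if "2 \<le> k" "k < ?r" for k using that by auto
    show "jt_det ?r c m = 0"
    proof (cases "\<exists>i\<in>{2..?r}. c i < 0")
      case True
      then obtain i where i: "i \<in> {2..?r}" "c i < 0" by auto
      have "c ?r \<le> c i" using i(1) c_mono by (rule_tac chain_antimono) auto
      then show ?thesis using i by (intro jt_det_eq_0_if_last_neg) auto
    next
      case False
      then have c_nonneg: "0 \<le> c k" if "k \<in> {2..?r}" for k using that not_less by blast
      have "0 < lam ! i" if "i \<in> R" for i
      proof -
        have "Suc i \<in> {2..?r}" using that R by auto
        then show ?thesis using c_nonneg[of "Suc i"] that unfolding c_def part_def by auto
      qed
      moreover have "decr_parts lam R ! Suc i \<le> decr_parts lam R ! i" if "1 \<le> i" "Suc i < ?r" for i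
      proof -
        have "c (Suc (Suc i)) \<le> c (Suc i)" "c (Suc i) \<ge> 0" "c (Suc (Suc i)) \<ge> 0"
          using c_mono[of "Suc i"] c_nonneg that by auto
        then show ?thesis using that unfolding c_def part_def by (auto split: if_splits)
      qed
      ultimately have "R \<in> tail_strips lam"
        using R unfolding tail_strips_def tail_nonincreasing_def by auto
      with \<open>R \<notin> tail_strips lam\<close> show ?thesis by simp
    qed
  qed
qed

lemma tail_gf_0_eq_jt_det:
  assumes noninc: "tail_nonincreasing lam"
  shows "tail_gf lam 0 = jt_det (length lam) (part lam) 0"
proof -
  let ?r = "length lam"
  have "part lam i \<le> part lam 2" if "i \<in> {2..?r}" for i
    using tail_nonincreasing_nth_mono[OF noninc, of 1 "i - 1"] that unfolding part_def by auto
  then have "jt_det ?r (part lam) 0 = (if \<forall>i\<in>{2..?r}. part lam i = 0 then 1 else 0)"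
    by (rule jt_det_0) (simp add: part_def)+
  moreover have "tail_cells lam = {} \<longleftrightarrow> (\<forall>i\<in>{2..?r}. part lam i = 0)"
  proof
    assume empty: "tail_cells lam = {}"
    show "\<forall>i\<in>{2..?r}. part lam i = 0"
    proof
      fix i assume "i \<in> {2..?r}"
      then have "(i - 1, 0) \<notin> tail_cells lam" "1 \<le> i - 1" "i - 1 < ?r" using empty by auto
      then show "part lam i = 0" unfolding tail_cells_def part_def by simp
    qed
  next
    assume zero: "\<forall>i\<in>{2..?r}. part lam i = 0"
    have "lam ! i = 0" if "1 \<le> i" "i < ?r" for i
      using zero[rule_format, of "Suc i"] that unfolding part_def by simp
    then show "tail_cells lam = {}" unfolding tail_cells_def by auto
  qed
  ultimately show ?thesis by (simp add: tail_gf_0)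
qed

lemma jt_det_Suc_part:
  "jt_det (length lam) (part lam) (Suc m) = (\<Sum>R\<in>Pow {1..<length lam}. monom 1 (m * card R) *
     jt_det (length lam) (\<lambda>i. part lam i - (if i - 1 \<in> R then 1 else 0)) m)"
proof -
  let ?r = "length lam"
  let ?f = "\<lambda>S. monom 1 (m * card S) * jt_det ?r (\<lambda>i. part lam i - (if i \<in> S then 1 else 0)) m"
  have bij: "bij_betw (\<lambda>R. Suc ` R) (Pow {1..<?r}) (Pow {2..?r})"
  proof (rule bij_betw_byWitness[where f'="\<lambda>S. (\<lambda>i. i - 1) ` S"])
    show "\<forall>S\<in>Pow {2..?r}. Suc ` (\<lambda>i. i - 1) ` S = S"
    proof
      fix S assume "S \<in> Pow {2..?r}"
      then have "\<forall>i\<in>S. Suc (i - 1) = i" by auto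
      then show "Suc ` (\<lambda>i. i - 1) ` S = S" by (simp add: image_image)
    qed
    show "(\<lambda>S. (\<lambda>i. i - 1) ` S) ` Pow {2..?r} \<subseteq> Pow {1..<?r}" by force
  qed (auto simp: image_image)
  have shift: "?f (Suc ` R) =
      monom 1 (m * card R) * jt_det ?r (\<lambda>i. part lam i - (if i - 1 \<in> R then 1 else 0)) m"
    for R
  proof -
    have "jt_det ?r (\<lambda>i. part lam i - (if i \<in> Suc ` R then 1 else 0)) m =
        jt_det ?r (\<lambda>i. part lam i - (if i - 1 \<in> R then 1 else 0)) m"
      by (rule jt_det_cong) (auto simp: image_iff)
    then show ?thesis by (simp add: card_image)
  qed
  show ?thesis
    unfolding jt_det_Suc[of ?r] sum.reindex_bij_betw[OF bij, of ?f, symmetric] shift ..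
qed

lemma jt_det_part_decr_parts:
  assumes "R \<in> tail_strips lam"
  shows "jt_det (length lam) (part (decr_parts lam R)) m =
    jt_det (length lam) (\<lambda>i. part lam i - (if i - 1 \<in> R then 1 else 0)) m"
proof (rule jt_det_cong)
  fix i assume "i \<in> {2..length lam}"
  moreover have "i - 1 \<in> R \<Longrightarrow> 0 < lam ! (i - 1)" using assms unfolding tail_strips_def by auto
  ultimately show "part (decr_parts lam R) i = part lam i - (if i - 1 \<in> R then 1 else 0)"
    unfolding part_def by (auto simp: of_nat_diff)
qed

lemma tail_gf_eq_jt_det:
  "tail_nonincreasing lam \<Longrightarrow> tail_gf lam m = jt_det (length lam) (part lam) m"
proof (induction m arbitrary: lam)
  case 0
  then show ?case by (rule tail_gf_0_eq_jt_det)
next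
  case (Suc m)
  let ?r = "length lam"
  let ?t = "\<lambda>R. monom 1 (m * card R) * jt_det ?r (\<lambda>i. part lam i - (if i - 1 \<in> R then 1 else 0)) m"
  have "tail_gf lam (Suc m) =
      (\<Sum>R\<in>tail_strips lam. monom 1 (m * card R) * tail_gf (decr_parts lam R) m)"
    by (rule tail_gf_Suc[OF Suc.prems])
  also have "\<dots> = (\<Sum>R\<in>tail_strips lam. ?t R)"
    using Suc.IH jt_det_part_decr_parts unfolding tail_strips_def by auto
  also have "\<dots> = (\<Sum>R\<in>Pow {1..<?r}. ?t R)"
    using jt_det_eq_0_unless_strip[OF Suc.prems]
    by (intro sum.mono_neutral_left) (auto simp: tail_strips_def)
  also have "\<dots> = jt_det ?r (part lam) (Suc m)"
    by (rule jt_det_Suc_part[symmetric])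
  finally show ?case .
qed

section \<open>The tail generating function as a Schur polynomial\<close>

lemma length_filter_ge_gt_iff:
  "sorted_wrt (\<ge>) (xs :: nat list) \<Longrightarrow>
    k < length (filter (\<lambda>x. v \<le> x) xs) \<longleftrightarrow> k < length xs \<and> v \<le> xs ! k"
proof (induction xs arbitrary: k)
  case (Cons a xs)
  have sorted: "sorted_wrt (\<ge>) xs" and le_a: "\<forall>y\<in>set xs. y \<le> a" using Cons.prems by auto
  show ?case
  proof (cases "v \<le> a")
    case True
    then show ?thesis using Cons.IH[OF sorted] by (cases k) auto
  next
    case False
    then have "filter (\<lambda>x. v \<le> x) xs = []" using le_a by (auto simp: filter_empty_conv)
    moreover have "\<not> v \<le> (a # xs) ! k" if "k < length (a # xs)"
      using False le_a that by (cases k) (auto, meson le_trans nth_mem)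
    ultimately show ?thesis using False by auto
  qed
qed simp

lemma mem_cells_conj_part_iff:
  assumes "sorted_wrt (\<ge>) xs"
  shows "(c, k) \<in> cells (conj_part xs) \<longleftrightarrow> k < length xs \<and> c < xs ! k"
proof -
  let ?M = "if xs = [] then 0 else Max (set xs)"
  have len: "length (conj_part xs) = ?M" unfolding conj_part_def by simp
  have nth: "c < ?M \<Longrightarrow> conj_part xs ! c = length (filter (\<lambda>x. Suc c \<le> x) xs)"
    unfolding conj_part_def by (simp del: upt_Suc add: nth_map_upt)
  have "c < ?M" if "k < length xs" "c < xs ! k"
  proof -
    have "xs ! k \<le> Max (set xs)" "xs \<noteq> []" using that by auto
    moreover from this have "c < Max (set xs)" using that by linarith
    ultimately show ?thesis by simp
  qed
  then show ?thesis
    unfolding cells_def len using nth length_filter_ge_gt_iff[OF assms] by auto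
qed

lemma cells_conj_part_tl_iff:
  "sorted_wrt (\<ge>) (tl lam) \<Longrightarrow> (c, k) \<in> cells (conj_part (tl lam)) \<longleftrightarrow> (Suc k, c) \<in> tail_cells lam"
  unfolding mem_cells_conj_part_iff tail_cells_def by (auto simp: nth_tl)

definition transpose_filling :: "(nat \<times> nat \<Rightarrow> nat) \<Rightarrow> nat \<times> nat \<Rightarrow> nat" where
  "transpose_filling U = (\<lambda>(c, k). U (Suc k, c))"

definition untranspose_filling :: "(nat \<times> nat \<Rightarrow> nat) \<Rightarrow> nat \<times> nat \<Rightarrow> nat" where
  "untranspose_filling T = (\<lambda>(i, j). if i = 0 then 0 else T (j, i - 1))"

context
  fixes lam :: "nat list"
  assumes sorted: "sorted_wrt (\<ge>) (tl lam)"
begin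

lemma transpose_filling_in_ssyt:
  assumes U: "U \<in> tail_fillings lam m"
  shows "transpose_filling U \<in> ssyt (conj_part (tl lam)) m"
  unfolding ssyt_def
proof (intro CollectI conjI allI impI ballI)
  fix c assume "c \<in> cells (conj_part (tl lam))"
  then show "transpose_filling U c \<in> {1..m}"
    using U cells_conj_part_tl_iff[OF sorted]
      unfolding transpose_filling_def tail_fillings_def by (cases c) auto
next
  fix c assume "c \<notin> cells (conj_part (tl lam))"
  then show "transpose_filling U c = 0"
    using U cells_conj_part_tl_iff[OF sorted]
      unfolding transpose_filling_def tail_fillings_def by (cases c) auto
next
  fix i j assume "(i, Suc j) \<in> cells (conj_part (tl lam))"
  then have "(Suc (Suc j), i) \<in> tail_cells lam" using cells_conj_part_tl_iff[OF sorted] by simp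
  then show "transpose_filling U (i, j) \<le> transpose_filling U (i, Suc j)"
    using U unfolding tail_fillings_def transpose_filling_def by auto
next
  fix i j assume "(Suc i, j) \<in> cells (conj_part (tl lam))"
  then have "(Suc j, Suc i) \<in> tail_cells lam" using cells_conj_part_tl_iff[OF sorted] by simp
  then show "transpose_filling U (i, j) < transpose_filling U (Suc i, j)"
    using U unfolding tail_fillings_def transpose_filling_def by auto
qed

lemma untranspose_filling_in_tail_fillings:
  assumes T: "T \<in> ssyt (conj_part (tl lam)) m"
  shows "untranspose_filling T \<in> tail_fillings lam m"
  unfolding tail_fillings_def
proof (intro CollectI conjI allI impI ballI)
  fix c assume c: "c \<in> tail_cells lam"
  obtain i j where cij: "c = (i, j)" by force
  then have "i \<noteq> 0" "(j, i - 1) \<in> cells (conj_part (tl lam))"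
    using c cells_conj_part_tl_iff[OF sorted, of j "i - 1"] unfolding tail_cells_def by auto
  then show "untranspose_filling T c \<in> {1..m}"
    using T cij unfolding untranspose_filling_def ssyt_def by auto
next
  fix c assume c: "c \<notin> tail_cells lam"
  obtain i j where cij: "c = (i, j)" by force
  then have "i = 0 \<or> (j, i - 1) \<notin> cells (conj_part (tl lam))"
    using c cells_conj_part_tl_iff[OF sorted, of j "i - 1"] by auto
  then show "untranspose_filling T c = 0"
    using T cij unfolding untranspose_filling_def ssyt_def by auto
next
  fix i j assume a: "(i, Suc j) \<in> tail_cells lam"
  then have "i \<noteq> 0" "(Suc j, i - 1) \<in> cells (conj_part (tl lam))"
    using cells_conj_part_tl_iff[OF sorted, of "Suc j" "i - 1"] unfolding tail_cells_def by auto
  then show "untranspose_filling T (i, j) < untranspose_filling T (i, Suc j)"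
    using T unfolding ssyt_def untranspose_filling_def by auto
next
  fix i j assume "(Suc i, j) \<in> tail_cells lam" and i: "1 \<le> i"
  then have "(j, Suc (i - 1)) \<in> cells (conj_part (tl lam))"
    using cells_conj_part_tl_iff[OF sorted, of j i] by simp
  then have "T (j, i - 1) \<le> T (j, Suc (i - 1))" using T unfolding ssyt_def by blast
  then show "untranspose_filling T (i, j) \<le> untranspose_filling T (Suc i, j)"
    using i unfolding untranspose_filling_def by simp
qed

lemma transpose_filling_bij:
  "bij_betw transpose_filling (tail_fillings lam m) (ssyt (conj_part (tl lam)) m)"
proof (rule bij_betw_byWitness[where f'=untranspose_filling])
  show "\<forall>U\<in>tail_fillings lam m. untranspose_filling (transpose_filling U) = U"
    using tail_fillings_zero unfolding untranspose_filling_def transpose_filling_def tail_cells_def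
    by fastforce
  show "\<forall>T\<in>ssyt (conj_part (tl lam)) m. transpose_filling (untranspose_filling T) = T"
    unfolding transpose_filling_def untranspose_filling_def by auto
qed (use transpose_filling_in_ssyt untranspose_filling_in_tail_fillings in auto)

lemma transpose_cells_bij:
  "bij_betw (\<lambda>(c, k). (Suc k, c)) (cells (conj_part (tl lam))) (tail_cells lam)"
proof (rule bij_betw_byWitness[where f'="\<lambda>(i, j). (j, i - 1)"])
  show "(\<lambda>(i, j). (j, i - 1)) ` tail_cells lam \<subseteq> cells (conj_part (tl lam))"
    using cells_conj_part_tl_iff[OF sorted] unfolding tail_cells_def
    by clarsimp
qed (use cells_conj_part_tl_iff[OF sorted] in \<open>auto simp: tail_cells_def\<close>)

lemma schur_eq_tail_gf: "schur (conj_part (tl lam)) m (\<lambda>a. monom (1::rat) (a - 1)) = tail_gf lam m"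
proof -
  let ?w = "\<lambda>U c. monom (1::rat) (U c - 1)"
  have "schur (conj_part (tl lam)) m (\<lambda>a. monom 1 (a - 1))
      = (\<Sum>U\<in>tail_fillings lam m. \<Prod>c\<in>cells (conj_part (tl lam)). ?w (transpose_filling U) c)"
    unfolding schur_def
    using sum.reindex_bij_betw[OF transpose_filling_bij,
        of "\<lambda>T. \<Prod>c\<in>cells (conj_part (tl lam)). ?w T c"]
    by simp
  also have "\<dots> = tail_gf lam m"
    unfolding tail_gf_def
  proof (intro sum.cong refl)
    fix U
    show "(\<Prod>c\<in>cells (conj_part (tl lam)). ?w (transpose_filling U) c) = (\<Prod>c\<in>tail_cells lam. ?w U c)"
      using prod.reindex_bij_betw[OF transpose_cells_bij, of "?w U"]
      unfolding transpose_filling_def by (simp add: case_prod_beta)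
  qed
  finally show ?thesis .
qed

end

section \<open>Standard Young tableaux with the maximal number of descents\<close>

definition nonincreasing :: "nat list \<Rightarrow> bool" where
  "nonincreasing lam \<longleftrightarrow> (\<forall>i. Suc i < length lam \<longrightarrow> lam ! Suc i \<le> lam ! i)"

definition first_row_entries :: "nat list \<Rightarrow> (nat \<times> nat \<Rightarrow> nat) \<Rightarrow> nat set" where
  "first_row_entries lam T = T ` {c \<in> cells lam. fst c = 0}"

text \<open>A descent at \<open>t\<close> puts \<open>t + 1\<close> below row 0, so the descents lie among these
  \<open>n - \<lambda>\<^sub>1\<close> candidates; a tableau has the maximal number of descents iff every
  candidate is a descent.\<close>
definition descent_candidates :: "nat list \<Rightarrow> (nat \<times> nat \<Rightarrow> nat) \<Rightarrow> nat set" where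
  "descent_candidates lam T = {t. 1 \<le> t \<and> t < sum_list lam \<and> Suc t \<notin> first_row_entries lam T}"

lemma nonincreasing_nth_mono: "nonincreasing lam \<Longrightarrow> i \<le> j \<Longrightarrow> j < length lam \<Longrightarrow> lam ! j \<le> lam ! i"
  by (rule chain_antimono[where f="nth lam"]) (auto simp: nonincreasing_def)

lemma mem_cells_above: "nonincreasing lam \<Longrightarrow> (i, j) \<in> cells lam \<Longrightarrow> i' \<le> i \<Longrightarrow> (i', j) \<in> cells lam"
  unfolding cells_def using nonincreasing_nth_mono[of lam i' i] by fastforce

lemma mem_cells_left: "(i, j) \<in> cells lam \<Longrightarrow> j' \<le> j \<Longrightarrow> (i, j') \<in> cells lam"
  unfolding cells_def by auto

lemma cells_Sigma: "cells lam = (SIGMA i:{..<length lam}. {..<lam ! i})"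
  unfolding cells_def by auto

lemma finite_cells: "finite (cells lam)"
  unfolding cells_Sigma by simp

lemma card_cells: "card (cells lam) = sum_list lam"
  unfolding cells_Sigma by (simp add: card_SigmaI sum_list_sum_nth atLeast0LessThan)

lemma syt_bij: "T \<in> syt lam \<Longrightarrow> bij_betw T (cells lam) {1..sum_list lam}"
  unfolding syt_def by auto

lemma syt_inj: "T \<in> syt lam \<Longrightarrow> inj_on T (cells lam)"
  using syt_bij bij_betw_imp_inj_on by blast

lemma syt_image: "T \<in> syt lam \<Longrightarrow> T ` cells lam = {1..sum_list lam}"
  using syt_bij bij_betw_imp_surj_on by blast

lemma syt_range: "T \<in> syt lam \<Longrightarrow> c \<in> cells lam \<Longrightarrow> T c \<in> {1..sum_list lam}"
  using syt_image by blast

lemma syt_zero: "T \<in> syt lam \<Longrightarrow> c \<notin> cells lam \<Longrightarrow> T c = 0"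
  unfolding syt_def by blast

lemma syt_row: "T \<in> syt lam \<Longrightarrow> (i, Suc j) \<in> cells lam \<Longrightarrow> T (i, j) < T (i, Suc j)"
  unfolding syt_def by auto

lemma syt_col: "T \<in> syt lam \<Longrightarrow> (Suc i, j) \<in> cells lam \<Longrightarrow> T (i, j) < T (Suc i, j)"
  unfolding syt_def by auto

lemma finite_syt: "finite (syt lam)"
proof -
  have "syt lam \<subseteq> {f. \<forall>x. (x \<in> cells lam \<longrightarrow> f x \<in> {1..sum_list lam}) \<and> (x \<notin> cells lam \<longrightarrow> f x = 0)}"
    using syt_range syt_zero by blast
  then show ?thesis by (rule finite_subset) (intro finite_set_of_finite_funs finite_cells; simp)
qed

lemma row_of_syt: "T \<in> syt lam \<Longrightarrow> c \<in> cells lam \<Longrightarrow> row_of lam T (T c) = fst c"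
  unfolding row_of_def by (subst the_equality[of _ c]) (auto dest: inj_onD[OF syt_inj])

lemma syt_row_less: "T \<in> syt lam \<Longrightarrow> (i, j') \<in> cells lam \<Longrightarrow> j < j' \<Longrightarrow> T (i, j) < T (i, j')"
proof (induction j')
  case (Suc j')
  have "T (i, j') < T (i, Suc j')" using syt_row Suc.prems by blast
  moreover have "j < j' \<Longrightarrow> T (i, j) < T (i, j')" using Suc mem_cells_left by force
  ultimately show ?case using Suc.prems by (cases "j = j'") auto
qed simp

lemma syt_row_le: "T \<in> syt lam \<Longrightarrow> (i, j') \<in> cells lam \<Longrightarrow> j \<le> j' \<Longrightarrow> T (i, j) \<le> T (i, j')"
  using syt_row_less[of T lam i j' j] by (cases "j = j'") auto

lemma syt_corner:
  assumes noninc: "nonincreasing lam" and T: "T \<in> syt lam" and "(0, 0) \<in> cells lam"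
  shows "T (0, 0) = 1"
proof -
  have "cells lam \<noteq> {}" using assms(3) by auto
  then have "0 < card (cells lam)" using finite_cells[of lam] by (simp add: card_gt_0_iff)
  then have "1 \<le> sum_list lam" using card_cells[of lam] by simp
  then have "1 \<in> T ` cells lam" using syt_image[OF T] by auto
  then obtain i j where c: "(i, j) \<in> cells lam" "T (i, j) = 1" by auto
  have "i = 0"
  proof (rule ccontr)
    assume "i \<noteq> 0"
    then obtain i' where i': "i = Suc i'" by (cases i) auto
    then have "(i', j) \<in> cells lam" using mem_cells_above[OF noninc c(1)] by simp
    then show False using syt_range[OF T] syt_col[OF T] c i' by fastforce
  qed
  moreover have "j = 0"
  proof (rule ccontr)
    assume "j \<noteq> 0"
    have "(i, 0) \<in> cells lam" using mem_cells_left c by blast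
    then show False using syt_range[OF T] syt_row_less[OF T c(1)] c \<open>j \<noteq> 0\<close> by fastforce
  qed
  ultimately show ?thesis using c by simp
qed

lemma descents_subset_candidates:
  assumes T: "T \<in> syt lam"
  shows "descents lam T \<subseteq> descent_candidates lam T"
proof
  fix t assume t: "t \<in> descents lam T"
  have "Suc t \<notin> first_row_entries lam T"
  proof
    assume "Suc t \<in> first_row_entries lam T"
    then obtain c where "c \<in> cells lam" "fst c = 0" "T c = Suc t"
      unfolding first_row_entries_def by auto
    then have "row_of lam T (Suc t) = 0" using row_of_syt[OF T] by metis
    then show False using t unfolding descents_def by auto
  qed
  then show "t \<in> descent_candidates lam T"
    using t unfolding descents_def descent_candidates_def by auto
qed

lemma finite_descent_candidates: "finite (descent_candidates lam T)"
  unfolding descent_candidates_def by auto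

lemma card_descent_candidates:
  assumes noninc: "nonincreasing lam" and T: "T \<in> syt lam" and "lam \<noteq> []" "0 < lam ! 0"
  shows "card (descent_candidates lam T) = sum_list lam - lam ! 0"
proof -
  let ?n = "sum_list lam" and ?N = "first_row_entries lam T"
  have first_row: "{c \<in> cells lam. fst c = 0} = (\<lambda>j. (0, j)) ` {..<lam ! 0}"
    using \<open>lam \<noteq> []\<close> unfolding cells_def by auto
  have "card {c \<in> cells lam. fst c = 0} = lam ! 0"
    unfolding first_row by (simp add: card_image inj_on_def)
  then have card_N: "card ?N = lam ! 0" unfolding first_row_entries_def
    using syt_inj[OF T] by (subst card_image) (auto intro: inj_on_subset)
  have one: "1 \<in> ?N"
    using syt_corner[OF noninc T] assms(3,4) unfolding first_row_entries_def cells_def by force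
  have N_sub: "?N \<subseteq> {1..?n}" unfolding first_row_entries_def using syt_range[OF T] by auto
  have "Suc ` descent_candidates lam T = {1..?n} - ?N"
  proof (intro equalityI subsetI)
    fix x assume x: "x \<in> {1..?n} - ?N"
    then have "x \<noteq> 1" using one by blast
    with x have "2 \<le> x" "x \<le> ?n" "x \<notin> ?N" by auto
    moreover from this have "1 \<le> x - 1" "x - 1 < ?n" "x = Suc (x - 1)" by linarith+
    ultimately have "x - 1 \<in> descent_candidates lam T" "x = Suc (x - 1)"
      unfolding descent_candidates_def by simp_all
    then show "x \<in> Suc ` descent_candidates lam T" by (metis imageI)
  next
    fix x assume "x \<in> Suc ` descent_candidates lam T"
    then show "x \<in> {1..?n} - ?N" unfolding descent_candidates_def by auto
  qed
  then have "card (descent_candidates lam T) = card ({1..?n} - ?N)"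
    using card_image[of Suc "descent_candidates lam T"] by simp
  also have "\<dots> = ?n - lam ! 0"
    using N_sub card_N by (simp add: card_Diff_subset finite_subset)
  finally show ?thesis .
qed

lemma max_des_iff:
  assumes noninc: "nonincreasing lam" and T: "T \<in> syt lam" and "lam \<noteq> []"
  shows "des lam T = sum_list lam - hd lam \<longleftrightarrow> descent_candidates lam T \<subseteq> descents lam T"
proof (cases "lam ! 0 = 0")
  case True
  then have "lam ! i = 0" if "i < length lam" for i
    using nonincreasing_nth_mono[OF noninc, of 0 i] that by simp
  then have zero: "sum_list lam = 0" by (simp add: sum_list_sum_nth)
  have "descent_candidates lam T = {}" "descents lam T = {}"
    unfolding descent_candidates_def descents_def zero by auto
  then show ?thesis unfolding des_def zero by simp
next
  case False
  have card: "card (descent_candidates lam T) = sum_list lam - hd lam"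
    using card_descent_candidates[OF noninc T] False \<open>lam \<noteq> []\<close> by (simp add: hd_conv_nth)
  have sub: "descents lam T \<subseteq> descent_candidates lam T" by (rule descents_subset_candidates[OF T])
  show ?thesis
  proof
    assume "des lam T = sum_list lam - hd lam"
    then have "card (descents lam T) = card (descent_candidates lam T)"
      using card unfolding des_def by simp
    then have "descents lam T = descent_candidates lam T"
      using sub finite_descent_candidates by (intro card_subset_eq) auto
    then show "descent_candidates lam T \<subseteq> descents lam T" by simp
  next
    assume "descent_candidates lam T \<subseteq> descents lam T"
    then have "descents lam T = descent_candidates lam T"
      using sub by (rule subset_antisym[rotated])
    then show "des lam T = sum_list lam - hd lam" using card unfolding des_def by simp
  qed
qed

lemma descents_eq_candidates:
  assumes "nonincreasing lam" and "T \<in> syt lam" and "lam \<noteq> []"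
    and "des lam T = sum_list lam - hd lam"
  shows "descents lam T = descent_candidates lam T"
  using max_des_iff[OF assms(1-3)] assms(4) descents_subset_candidates[OF assms(2)] by auto

section \<open>Peeling the entries after the first row\<close>

text \<open>Let \<open>s\<close> be the last entry of row 0 of a tableau \<open>T\<close> with the maximal number of
  descents. Every \<open>t \<ge> s\<close> is a descent, so \<open>s, s + 1, \<dots>, n\<close> lie at the ends of strictly
  increasing rows \<open>0 = r\<^sub>0 < r\<^sub>1 < \<dots>\<close>. Removing them leaves a tableau of the same kind whose
  first row is one shorter, and the removed entries contribute \<open>s + \<dots> + (n - 1)\<close> to the
  major index. Conversely, any such set of rows can be filled back in increasing order.\<close>

definition rank_in :: "nat set \<Rightarrow> nat \<Rightarrow> nat" where
  "rank_in A i = card {i' \<in> A. i' < i}"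

definition first_row_last :: "nat list \<Rightarrow> (nat \<times> nat \<Rightarrow> nat) \<Rightarrow> nat" where
  "first_row_last lam T = T (0, lam ! 0 - 1)"

definition late_rows :: "nat list \<Rightarrow> (nat \<times> nat \<Rightarrow> nat) \<Rightarrow> nat set" where
  "late_rows lam T = fst ` {c \<in> cells lam. first_row_last lam T < T c}"

definition restrict_syt :: "nat list \<Rightarrow> nat set \<Rightarrow> (nat \<times> nat \<Rightarrow> nat) \<Rightarrow> nat \<times> nat \<Rightarrow> nat" where
  "restrict_syt lam R T = (\<lambda>c. if c \<in> cells (decr_parts lam (insert 0 R)) then T c else 0)"

definition extend_syt :: "nat list \<Rightarrow> nat set \<Rightarrow> (nat \<times> nat \<Rightarrow> nat) \<Rightarrow> nat \<times> nat \<Rightarrow> nat" where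
  "extend_syt lam R T' = (\<lambda>c. if c \<in> cells (decr_parts lam (insert 0 R)) then T' c
      else if c \<in> cells lam
        then Suc (sum_list (decr_parts lam (insert 0 R))) + rank_in (insert 0 R) (fst c)
      else 0)"

definition strips :: "nat list \<Rightarrow> nat set set" where
  "strips lam = {R. R \<subseteq> {1..<length lam} \<and> (\<forall>i\<in>R. 0 < lam ! i)
      \<and> nonincreasing (decr_parts lam (insert 0 R))}"

lemma cells_decr_parts:
  assumes "A \<subseteq> {..<length lam}" "\<forall>i\<in>A. 0 < lam ! i"
  shows "cells (decr_parts lam A) = cells lam - (\<lambda>i. (i, lam ! i - 1)) ` A"
  using assms unfolding cells_def by (auto split: if_splits)

lemma row_ends_subset_cells:
  assumes "A \<subseteq> {..<length lam}" "\<forall>i\<in>A. 0 < lam ! i"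
  shows "(\<lambda>i. (i, lam ! i - 1)) ` A \<subseteq> cells lam"
  using assms unfolding cells_def by auto

lemma sum_list_decr_parts:
  assumes A: "A \<subseteq> {..<length lam}" "\<forall>i\<in>A. 0 < lam ! i" and "finite A"
  shows "sum_list lam = sum_list (decr_parts lam A) + card A"
proof -
  let ?E = "(\<lambda>i. (i, lam ! i - 1)) ` A"
  have "cells lam = cells (decr_parts lam A) \<union> ?E" "cells (decr_parts lam A) \<inter> ?E = {}"
    using cells_decr_parts[OF A] row_ends_subset_cells[OF A] by auto
  then have "card (cells lam) = card (cells (decr_parts lam A)) + card ?E"
    using card_Un_disjoint[OF finite_cells finite_imageI[OF \<open>finite A\<close>]] by simp
  moreover have "card ?E = card A" by (rule card_image) (auto simp: inj_on_def)
  ultimately show ?thesis by (simp add: card_cells)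
qed

lemma rank_in_0: "rank_in A 0 = 0"
  unfolding rank_in_def by simp

lemma rank_in_less: "finite A \<Longrightarrow> i \<in> A \<Longrightarrow> j \<in> A \<Longrightarrow> i < j \<Longrightarrow> rank_in A i < rank_in A j"
  unfolding rank_in_def by (rule psubset_card_mono) auto

lemma rank_in_mono: "finite A \<Longrightarrow> i \<le> j \<Longrightarrow> rank_in A i \<le> rank_in A j"
  unfolding rank_in_def by (rule card_mono) auto

lemma rank_in_less_iff: "finite A \<Longrightarrow> i \<in> A \<Longrightarrow> j \<in> A \<Longrightarrow> rank_in A i < rank_in A j \<longleftrightarrow> i < j"
  using rank_in_less[of A i j] rank_in_mono[of A j i] by (cases "i < j") auto

lemma inj_on_rank_in: "finite A \<Longrightarrow> inj_on (rank_in A) A"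
  by (rule inj_onI) (metis linorder_cases less_irrefl rank_in_less)

lemma rank_in_less_card: "finite A \<Longrightarrow> i \<in> A \<Longrightarrow> rank_in A i < card A"
  unfolding rank_in_def by (rule psubset_card_mono) auto

lemma rank_in_image: "finite A \<Longrightarrow> rank_in A ` A = {..<card A}"
  using rank_in_less_card card_image[OF inj_on_rank_in]
  by (intro card_subset_eq) (auto simp: image_subset_iff)

lemma rank_in_pos: "0 \<in> A \<Longrightarrow> finite A \<Longrightarrow> 0 < i \<Longrightarrow> 0 < rank_in A i"
  unfolding rank_in_def by (subst card_gt_0_iff) auto
context
  fixes lam :: "nat list" and T :: "nat \<times> nat \<Rightarrow> nat" and m :: nat
  assumes noninc: "nonincreasing lam" and ne: "lam \<noteq> []" and first_len: "lam ! 0 = Suc m"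
    and T: "T \<in> syt lam" and max_des: "des lam T = sum_list lam - hd lam"
begin

private abbreviation "peel_start \<equiv> first_row_last lam T"
private abbreviation "late \<equiv> late_rows lam T"
private abbreviation "peel_ends \<equiv> insert 0 (late_rows lam T)"
private abbreviation "peeled \<equiv> decr_parts lam (insert 0 (late_rows lam T))"
private abbreviation "peeled_syt \<equiv> restrict_syt lam (late_rows lam T) T"

lemma first_row_last_cell: "(0, m) \<in> cells lam" using ne first_len unfolding cells_def by auto

lemma first_row_last_eq: "peel_start = T (0, m)"
  unfolding first_row_last_def first_len by simp

lemma first_row_last_range: "1 \<le> peel_start" "peel_start \<le> sum_list lam"
  using syt_range[OF T first_row_last_cell] first_row_last_eq by auto

lemma first_row_entries_le: "x \<in> first_row_entries lam T \<Longrightarrow> x \<le> peel_start"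
proof -
  assume "x \<in> first_row_entries lam T"
  then obtain j where "(0, j) \<in> cells lam" "x = T (0, j)"
    unfolding first_row_entries_def by force
  moreover then have "j \<le> m" using first_len unfolding cells_def by auto
  ultimately show ?thesis using syt_row_le[OF T first_row_last_cell] first_row_last_eq by simp
qed

lemma first_row_last_mem: "peel_start \<in> first_row_entries lam T"
  using first_row_last_cell first_row_last_eq unfolding first_row_entries_def by force

lemma peel_descents: "descents lam T = descent_candidates lam T"
  by (rule descents_eq_candidates[OF noninc T ne max_des])

lemma descent_after_first_row_last:
  "peel_start \<le> t \<Longrightarrow> t < sum_list lam \<Longrightarrow>
    row_of lam T t < row_of lam T (Suc t)"
proof -
  assume a: "peel_start \<le> t" "t < sum_list lam"
  have "Suc t \<notin> first_row_entries lam T" using first_row_entries_le a by fastforce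
  then have "t \<in> descent_candidates lam T"
    using a first_row_last_range unfolding descent_candidates_def by auto
  then show ?thesis using peel_descents unfolding descents_def by auto
qed

lemma row_of_strict_mono_after:
  "peel_start \<le> t \<Longrightarrow> t < t' \<Longrightarrow>
    t' \<le> sum_list lam \<Longrightarrow> row_of lam T t < row_of lam T t'"
proof (induction t')
  case 0 then show ?case by simp
next
  case (Suc t')
  show ?case
  proof (cases "t = t'")
    case True then show ?thesis using descent_after_first_row_last Suc.prems by simp
  next
    case False
    then have "row_of lam T t < row_of lam T t'" using Suc by simp
    moreover have "row_of lam T t' < row_of lam T (Suc t')"
      using descent_after_first_row_last Suc.prems False by simp
    ultimately show ?thesis by simp
  qed
qed

lemma late_cells_row_less:
  "c \<in> cells lam \<Longrightarrow> c' \<in> cells lam \<Longrightarrow>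
    peel_start \<le> T c \<Longrightarrow> T c < T c' \<Longrightarrow> fst c < fst c'"
proof -
  assume a: "c \<in> cells lam" "c' \<in> cells lam" "peel_start \<le> T c" "T c < T c'"
  have "T c' \<le> sum_list lam" using syt_range[OF T a(2)] by simp
  then have "row_of lam T (T c) < row_of lam T (T c')" using row_of_strict_mono_after a by blast
  then show ?thesis using row_of_syt[OF T a(1)] row_of_syt[OF T a(2)] by simp
qed

lemma late_cell_row_end:
  assumes c: "c \<in> cells lam" and v: "peel_start < T c"
  shows "fst c \<noteq> 0" "snd c = lam ! fst c - 1"
proof -
  show "fst c \<noteq> 0"
  proof
    assume "fst c = 0"
    then have "T c \<in> first_row_entries lam T" using c unfolding first_row_entries_def by auto
    then show False using first_row_entries_le v by fastforce
  qed
  show "snd c = lam ! fst c - 1"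
  proof (rule ccontr)
    assume a: "snd c \<noteq> lam ! fst c - 1"
    obtain i j where cij: "c = (i, j)" by force
    have c2: "(i, Suc j) \<in> cells lam" using c a cij unfolding cells_def by auto
    have "T (i, j) < T (i, Suc j)" using syt_row[OF T c2] .
    then have "fst c < fst (i, Suc j)" using late_cells_row_less[OF c c2] v cij by simp
    then show False using cij by simp
  qed
qed


lemma late_rows_props:
  "late \<subseteq> {1..<length lam}" "\<forall>i\<in>late. 0 < lam ! i" "0 \<notin> late"
proof -
  show "late \<subseteq> {1..<length lam}"
    using late_cell_row_end unfolding late_rows_def by (force simp: cells_def)
  show "\<forall>i\<in>late. 0 < lam ! i" unfolding late_rows_def cells_def by auto
  show "0 \<notin> late" using late_cell_row_end unfolding late_rows_def by force
qed

lemma finite_late_rows: "finite late" using late_rows_props(1) finite_subset by blast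

lemma peel_rows_props:
  "peel_ends \<subseteq> {..<length lam}" "\<forall>i\<in>peel_ends. 0 < lam ! i"
  using late_rows_props ne first_len by auto

lemma cells_from_first_row_last:
  "{c \<in> cells lam. peel_start \<le> T c} = (\<lambda>i. (i, lam ! i - 1)) ` peel_ends"
proof (intro equalityI subsetI)
  fix c assume "c \<in> {c \<in> cells lam. peel_start \<le> T c}"
  then have c: "c \<in> cells lam" "peel_start \<le> T c" by auto
  show "c \<in> (\<lambda>i. (i, lam ! i - 1)) ` peel_ends"
  proof (cases "T c = peel_start")
    case True
    then have "c = (0, m)"
      using syt_inj[OF T] c first_row_last_cell first_row_last_eq by (auto dest: inj_onD)
    then show ?thesis using first_len by force
  next
    case False
    then have "peel_start < T c" using c by simp
    then have "fst c \<in> late" "snd c = lam ! fst c - 1"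
      using late_cell_row_end c unfolding late_rows_def by auto
    moreover have "c = (fst c, lam ! fst c - 1)"
      using \<open>snd c = lam ! fst c - 1\<close> by (cases c) simp
    ultimately show ?thesis by (intro rev_image_eqI[of "fst c"]) auto
  qed
next
  fix x assume "x \<in> (\<lambda>i. (i, lam ! i - 1)) ` peel_ends"
  then obtain i where i: "i \<in> peel_ends" "x = (i, lam ! i - 1)" by auto
  show "x \<in> {c \<in> cells lam. peel_start \<le> T c}"
  proof (cases "i = 0")
    case True then show ?thesis using i first_row_last_cell first_row_last_eq first_len by simp
  next
    case False
    then have "i \<in> late" using i by simp
    then obtain c where c: "c \<in> cells lam" "peel_start < T c" "fst c = i"
      unfolding late_rows_def by auto
    then have "c = x" using late_cell_row_end[OF c(1,2)] i by (cases c) auto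
    then show ?thesis using c by simp
  qed
qed

lemma cells_peeled: "cells peeled = {c \<in> cells lam. T c < peel_start}"
proof -
  have "cells peeled = cells lam - (\<lambda>i. (i, lam ! i - 1)) ` peel_ends"
    using cells_decr_parts[OF peel_rows_props] .
  also have "\<dots> = cells lam - {c \<in> cells lam. peel_start \<le> T c}"
    using cells_from_first_row_last by simp
  also have "\<dots> = {c \<in> cells lam. T c < peel_start}" by auto
  finally show ?thesis .
qed

lemma image_peeled: "T ` cells peeled = {1..<peel_start}"
proof -
  have "T ` cells peeled = {v \<in> T ` cells lam. v < peel_start}" unfolding cells_peeled by auto
  also have "\<dots> = {1..<peel_start}"
    unfolding syt_image[OF T] using first_row_last_range by auto
  finally show ?thesis .
qed

lemma sum_list_peeled: "sum_list peeled = peel_start - 1"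
proof -
  have "sum_list peeled = card (cells peeled)" by (simp add: card_cells)
  also have "\<dots> = card (T ` cells peeled)"
    unfolding cells_peeled by (intro card_image[symmetric] inj_on_subset[OF syt_inj[OF T]]) auto
  also have "\<dots> = peel_start - 1" unfolding image_peeled by simp
  finally show ?thesis .
qed

lemma card_late_rows: "card late = sum_list lam - peel_start"
proof -
  let ?end_cells = "{c \<in> cells lam. peel_start \<le> T c}"
  have "T ` ?end_cells = {v \<in> T ` cells lam. peel_start \<le> v}" by auto
  also have "\<dots> = {peel_start..sum_list lam}"
    unfolding syt_image[OF T] using first_row_last_range by auto
  finally have "T ` ?end_cells = {peel_start..sum_list lam}" .
  moreover have "card (T ` ?end_cells) = card ?end_cells"
    by (intro card_image inj_on_subset[OF syt_inj[OF T]]) auto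
  moreover have "card ?end_cells = card peel_ends"
    unfolding cells_from_first_row_last by (intro card_image) (auto simp: inj_on_def)
  moreover have "card peel_ends = Suc (card late)" using finite_late_rows late_rows_props(3) by simp
  ultimately show ?thesis using first_row_last_range by simp
qed

lemma restrict_syt_in_syt: "peeled_syt \<in> syt peeled"
proof -
  let ?T' = "peeled_syt"
  have eq: "\<And>c. c \<in> cells peeled \<Longrightarrow> ?T' c = T c"
    unfolding restrict_syt_def by simp
  have inj: "inj_on T (cells peeled)"
    by (rule inj_on_subset[OF syt_inj[OF T]]) (simp add: cells_peeled)
  have bij: "bij_betw T (cells peeled) {1..<peel_start}"
    unfolding bij_betw_def using inj image_peeled by simp
  have "{1..<peel_start} = {1..sum_list peeled}" using sum_list_peeled first_row_last_range by auto
  have bij0: "bij_betw ?T' (cells peeled) {1..<peel_start}"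
    using bij_betw_cong[of "cells peeled" ?T' T, OF eq] bij by simp
  then have bij': "bij_betw ?T' (cells peeled) {1..sum_list peeled}"
    using \<open>{1..<peel_start} = {1..sum_list peeled}\<close> by simp
  show ?thesis unfolding syt_def
  proof (intro CollectI conjI allI impI bij')
    fix c assume "c \<notin> cells peeled" then show "?T' c = 0" unfolding restrict_syt_def by simp
  next
    fix i j assume a: "(i, Suc j) \<in> cells peeled"
    then have "(i, Suc j) \<in> cells lam" "T (i, Suc j) < peel_start"
      unfolding cells_peeled by auto
    moreover then have "(i, j) \<in> cells lam" using mem_cells_left[of i "Suc j" lam j] by simp
    moreover have "T (i, j) < T (i, Suc j)" using syt_row[OF T] calculation(1) .
    ultimately have "(i, j) \<in> cells peeled" unfolding cells_peeled by auto
    then show "?T' (i, j) < ?T' (i, Suc j)"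
      using a eq \<open>T (i, j) < T (i, Suc j)\<close> by simp
  next
    fix i j assume a: "(Suc i, j) \<in> cells peeled"
    then have "(Suc i, j) \<in> cells lam" "T (Suc i, j) < peel_start"
      unfolding cells_peeled by auto
    moreover then have "(i, j) \<in> cells lam"
      using mem_cells_above[OF noninc, of "Suc i" j i] by simp
    moreover have "T (i, j) < T (Suc i, j)" using syt_col[OF T] calculation(1) .
    ultimately have "(i, j) \<in> cells peeled" unfolding cells_peeled by auto
    then show "?T' (i, j) < ?T' (Suc i, j)"
      using a eq \<open>T (i, j) < T (Suc i, j)\<close> by simp
  qed
qed

lemma nonincreasing_peeled: "nonincreasing peeled"
  unfolding nonincreasing_def
proof (intro allI impI)
  fix i assume i: "Suc i < length peeled"
  show "peeled ! Suc i \<le> peeled ! i"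
  proof (rule ccontr)
    assume "\<not> ?thesis"
    then have lt: "peeled ! i < peeled ! Suc i" by simp
    let ?L = "peeled ! i"
    have "(Suc i, ?L) \<in> cells peeled" using i lt unfolding cells_def by auto
    then have c1: "(Suc i, ?L) \<in> cells lam" "T (Suc i, ?L) < peel_start"
      unfolding cells_peeled by auto
    then have c2: "(i, ?L) \<in> cells lam" using mem_cells_above[OF noninc c1(1), of i] by simp
    have "T (i, ?L) < T (Suc i, ?L)" using syt_col[OF T c1(1)] .
    then have "(i, ?L) \<in> cells peeled" using c1 c2 unfolding cells_peeled by auto
    then show False unfolding cells_def by simp
  qed
qed

lemma late_rows_in_strips: "late \<in> strips lam"
  unfolding strips_def using late_rows_props nonincreasing_peeled by auto

lemma peeled_ne: "peeled \<noteq> []"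
  using ne length_decr_parts by (metis length_0_conv)

lemma row_of_restrict_syt:
  assumes "1 \<le> v" "v < peel_start"
  shows "row_of peeled peeled_syt v = row_of lam T v"
proof -
  have "v \<in> T ` cells peeled" using image_peeled assms by auto
  then obtain c where c: "c \<in> cells peeled" "T c = v" by auto
  have c1: "c \<in> cells lam" using c unfolding cells_peeled by auto
  have "peeled_syt c = v" using c unfolding restrict_syt_def by simp
  then have "row_of peeled peeled_syt v = fst c"
    using row_of_syt[OF restrict_syt_in_syt c(1)] by simp
  moreover have "row_of lam T v = fst c" using row_of_syt[OF T c1] c by simp
  ultimately show ?thesis by simp
qed

lemma first_row_entries_restrict_syt:
  "x < peel_start \<Longrightarrow>
    (x \<in> first_row_entries peeled peeled_syt) = (x \<in> first_row_entries lam T)"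
proof -
  assume x: "x < peel_start"
  have "first_row_entries peeled peeled_syt = T ` {c \<in> cells peeled. fst c = 0}"
    unfolding first_row_entries_def restrict_syt_def by (rule image_cong) simp_all
  also have "\<dots> = {v \<in> first_row_entries lam T. v < peel_start}"
    unfolding cells_peeled first_row_entries_def by auto
  finally show ?thesis using x by simp
qed

lemma descent_candidates_split:
  "descent_candidates lam T =
    descent_candidates peeled peeled_syt \<union> {peel_start..<sum_list lam}"
proof -
  let ?s = "peel_start"
  show ?thesis
  proof (intro equalityI subsetI)
    fix t assume t: "t \<in> descent_candidates lam T"
    then have t1: "1 \<le> t" "t < sum_list lam" "Suc t \<notin> first_row_entries lam T"
      unfolding descent_candidates_def by auto
    show "t \<in> descent_candidates peeled peeled_syt \<union> {?s..<sum_list lam}"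
    proof (cases "?s \<le> t")
      case True then show ?thesis using t1 by auto
    next
      case False
      then have "Suc t \<noteq> ?s" using t1 first_row_last_mem by auto
      then have "Suc t < ?s" using False by simp
      then have "t \<in> descent_candidates peeled peeled_syt"
        using t1 first_row_entries_restrict_syt[of "Suc t"] sum_list_peeled
          unfolding descent_candidates_def
          by auto
      then show ?thesis by simp
    qed
  next
    fix t assume t: "t \<in> descent_candidates peeled peeled_syt \<union> {?s..<sum_list lam}"
    show "t \<in> descent_candidates lam T"
    proof (cases "t \<in> {?s..<sum_list lam}")
      case True
      then have "Suc t \<notin> first_row_entries lam T" using first_row_entries_le by fastforce
      then show ?thesis using True first_row_last_range unfolding descent_candidates_def by auto
    next
      case False
      then have t1: "1 \<le> t" "t < ?s - 1" "Suc t \<notin> first_row_entries peeled peeled_syt"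
        using t sum_list_peeled unfolding descent_candidates_def by auto
      then have "Suc t \<notin> first_row_entries lam T"
        using first_row_entries_restrict_syt[of "Suc t"] by simp
      then show ?thesis using t1 first_row_last_range unfolding descent_candidates_def by auto
    qed
  qed
qed

lemma restrict_syt_max_des: "des peeled peeled_syt = sum_list peeled - hd peeled"
proof -
  have "descent_candidates peeled peeled_syt \<subseteq> descents peeled peeled_syt"
  proof
    fix t assume t: "t \<in> descent_candidates peeled peeled_syt"
    then have t1: "1 \<le> t" "Suc t < peel_start"
      using sum_list_peeled unfolding descent_candidates_def by auto
    have "t \<in> descent_candidates lam T" using t descent_candidates_split by auto
    then have "row_of lam T t < row_of lam T (Suc t)"
      using peel_descents unfolding descents_def by auto
    then show "t \<in> descents peeled peeled_syt"
      using t row_of_restrict_syt[of t] row_of_restrict_syt[of "Suc t"] t1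
        unfolding descents_def descent_candidates_def
        by auto
  qed
  then show ?thesis using max_des_iff[OF nonincreasing_peeled restrict_syt_in_syt peeled_ne] by simp
qed

lemma maj_restrict_syt: "maj lam T = maj peeled peeled_syt + \<Sum>{peel_start..<sum_list lam}"
proof -
  have d': "descents peeled peeled_syt = descent_candidates peeled peeled_syt"
    by (rule descents_eq_candidates[OF nonincreasing_peeled restrict_syt_in_syt peeled_ne
      restrict_syt_max_des])
  have disj: "descent_candidates peeled peeled_syt \<inter> {peel_start..<sum_list lam} = {}"
    using sum_list_peeled unfolding descent_candidates_def by auto
  show ?thesis unfolding maj_def peel_descents d' descent_candidates_split
    by (rule sum.union_disjoint[OF finite_descent_candidates _ disj]) simp
qed

lemma late_cells_less_iff:
  assumes c: "c \<in> cells lam" "peel_start \<le> T c" and c': "c' \<in> cells lam" "peel_start \<le> T c'"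
  shows "T c' < T c \<longleftrightarrow> fst c' < fst c"
proof
  assume "fst c' < fst c"
  then have "c \<noteq> c'" "\<not> T c < T c'" using late_cells_row_less[OF c(1) c'(1) c(2)] by auto
  moreover have "T c \<noteq> T c'"
    using inj_onD[OF syt_inj[OF T] _ c(1) c'(1)] \<open>c \<noteq> c'\<close> by blast
  ultimately show "T c' < T c" by simp
qed (use late_cells_row_less[OF c'(1) c(1) c'(2)] in simp)

lemma late_entry_eq:
  assumes c: "c \<in> cells lam" and v: "peel_start \<le> T c"
  shows "T c = peel_start + rank_in peel_ends (fst c)"
proof -
  let ?E = "{c \<in> cells lam. peel_start \<le> T c}"
  let ?L = "{c' \<in> ?E. T c' < T c}"
  have "T ` ?L = {v \<in> T ` cells lam. peel_start \<le> v \<and> v < T c}" by auto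
  also have "\<dots> = {peel_start..<T c}"
    unfolding syt_image[OF T] using syt_range[OF T c] first_row_last_range by auto
  finally have "T ` ?L = {peel_start..<T c}" .
  moreover have "card (T ` ?L) = card ?L"
    by (intro card_image inj_on_subset[OF syt_inj[OF T]]) auto
  ultimately have card_L: "card ?L = T c - peel_start" by simp
  have "?L = {c' \<in> ?E. fst c' < fst c}"
    using late_cells_less_iff[OF c v] by blast
  also have "\<dots> = (\<lambda>i. (i, lam ! i - 1)) ` {i \<in> peel_ends. i < fst c}"
    unfolding cells_from_first_row_last by auto
  finally have "card ?L = rank_in peel_ends (fst c)"
    unfolding rank_in_def by (simp add: card_image inj_on_def)
  then show ?thesis using card_L v by simp
qed

lemma extend_restrict_syt: "extend_syt lam late peeled_syt = T"
proof
  fix c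
  show "extend_syt lam late peeled_syt c = T c"
  proof (cases "c \<in> cells peeled")
    case True then show ?thesis unfolding extend_syt_def restrict_syt_def by simp
  next
    case False
    show ?thesis
    proof (cases "c \<in> cells lam")
      case True
      then have "peel_start \<le> T c" using False unfolding cells_peeled by auto
      then have "T c = peel_start + rank_in peel_ends (fst c)" using late_entry_eq True by blast
      then show ?thesis using True False sum_list_peeled first_row_last_range
        unfolding extend_syt_def
        by simp
    next
      case c: False
      then show ?thesis using False syt_zero[OF T c] unfolding extend_syt_def by simp
    qed
  qed
qed

end

context
  fixes lam :: "nat list" and R :: "nat set" and m :: nat
    and T' :: "nat \<times> nat \<Rightarrow> nat"
  assumes noninc: "nonincreasing lam" and ne: "lam \<noteq> []" and first_len: "lam ! 0 = Suc m"
    and R: "R \<in> strips lam" and T': "T' \<in> syt (decr_parts lam (insert 0 R))"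
    and max_des': "des (decr_parts lam (insert 0 R)) T'
      = sum_list (decr_parts lam (insert 0 R)) - hd (decr_parts lam (insert 0 R))"
begin

private abbreviation "graft_ends \<equiv> insert 0 R"
private abbreviation "graft_shape \<equiv> decr_parts lam (insert 0 R)"
private abbreviation "graft_size \<equiv> sum_list (decr_parts lam (insert 0 R))"
private abbreviation "end_cells \<equiv> (\<lambda>i. (i, lam ! i - 1)) ` insert 0 R"
private abbreviation "grafted \<equiv> extend_syt lam R T'"

lemma graft_strip_props:
  "R \<subseteq> {1..<length lam}" "\<forall>i\<in>R. 0 < lam ! i" "nonincreasing graft_shape"
  "0 \<notin> R"
  "finite graft_ends"
proof -
  show "R \<subseteq> {1..<length lam}" "\<forall>i\<in>R. 0 < lam ! i" "nonincreasing graft_shape"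
    using R unfolding strips_def by auto
  then show "0 \<notin> R" by auto
  have "finite R" by (rule finite_subset[OF \<open>R \<subseteq> {1..<length lam}\<close>]) simp
  then show "finite graft_ends" by simp
qed

lemma graft_rows_props:
  "graft_ends \<subseteq> {..<length lam}" "\<forall>i\<in>graft_ends. 0 < lam ! i"
  using graft_strip_props ne first_len by auto

lemma cells_graft_shape:
  "cells graft_shape = cells lam - end_cells" by (rule cells_decr_parts[OF graft_rows_props])
lemma end_cells_subset:
  "end_cells \<subseteq> cells lam" by (rule row_ends_subset_cells[OF graft_rows_props])

lemma mem_end_cells_iff:
  "((i, j) \<in> end_cells) = (i \<in> graft_ends \<and> j = lam ! i - 1)" by auto

lemma sum_list_graft: "sum_list lam = graft_size + card graft_ends"
  using sum_list_decr_parts[OF graft_rows_props graft_strip_props(5)] .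

lemma extend_syt_old:
  "c \<in> cells graft_shape \<Longrightarrow> grafted c = T' c" unfolding extend_syt_def by simp

lemma extend_syt_new:
  "i \<in> graft_ends \<Longrightarrow>
    grafted (i, lam ! i - 1) = Suc graft_size + rank_in graft_ends i"
proof -
  assume i: "i \<in> graft_ends"
  then have "(i, lam ! i - 1) \<in> end_cells" by auto
  then have "(i, lam ! i - 1) \<notin> cells graft_shape" "(i, lam ! i - 1) \<in> cells lam"
    using cells_graft_shape end_cells_subset by auto
  then show ?thesis unfolding extend_syt_def by simp
qed

lemma extend_syt_zero: "c \<notin> cells lam \<Longrightarrow> grafted c = 0"
  using cells_graft_shape unfolding extend_syt_def by auto

lemma graft_range_old:
  "c \<in> cells graft_shape \<Longrightarrow> T' c \<in> {1..graft_size}" using syt_range[OF T'] by blast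

lemma extend_syt_image_end_cells: "grafted ` end_cells = {Suc graft_size..sum_list lam}"
proof -
  have "grafted ` end_cells = (\<lambda>i. Suc graft_size + rank_in graft_ends i) ` graft_ends"
    using extend_syt_new by (auto simp: image_image)
  also have "\<dots> = (\<lambda>k. Suc graft_size + k) ` (rank_in graft_ends ` graft_ends)"
    by (simp add: image_image)
  also have "\<dots> = (\<lambda>k. Suc graft_size + k) ` {..<card graft_ends}"
    using rank_in_image[OF graft_strip_props(5)] by simp
  also have "\<dots> = {Suc graft_size..<Suc graft_size + card graft_ends}"
  proof (intro equalityI subsetI)
    fix x assume "x \<in> (\<lambda>k. Suc graft_size + k) ` {..<card graft_ends}"
    then show "x \<in> {Suc graft_size..<Suc graft_size + card graft_ends}" by auto
  next
    fix x assume x: "x \<in> {Suc graft_size..<Suc graft_size + card graft_ends}"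
    then have "x = Suc graft_size + (x - Suc graft_size)"
      "x - Suc graft_size \<in> {..<card graft_ends}"
      by auto
    then show "x \<in> (\<lambda>k. Suc graft_size + k) ` {..<card graft_ends}"
      by (rule rev_image_eqI[rotated])
  qed
  also have "\<dots> = {Suc graft_size..sum_list lam}" using sum_list_graft by auto
  finally show ?thesis .
qed

lemma inj_on_extend_syt_end_cells: "inj_on grafted end_cells"
proof (rule inj_onI)
  fix x y assume x: "x \<in> end_cells" and y: "y \<in> end_cells" and eq: "grafted x = grafted y"
  obtain i where i: "i \<in> graft_ends" "x = (i, lam ! i - 1)" using x by auto
  obtain j where j: "j \<in> graft_ends" "y = (j, lam ! j - 1)" using y by auto
  have "rank_in graft_ends i = rank_in graft_ends j" using eq i j extend_syt_new by simp
  then have "i = j" using inj_onD[OF inj_on_rank_in[OF graft_strip_props(5)] _ i(1) j(1)] by simp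
  then show "x = y" using i j by simp
qed

lemma extend_syt_bij: "bij_betw grafted (cells lam) {1..sum_list lam}"
proof -
  have "bij_betw grafted (cells graft_shape) {1..graft_size}"
    using bij_betw_cong[of "cells graft_shape" grafted T', OF extend_syt_old] syt_bij[OF T'] by simp
  moreover have "bij_betw grafted end_cells {Suc graft_size..sum_list lam}"
    unfolding bij_betw_def using inj_on_extend_syt_end_cells extend_syt_image_end_cells by simp
  ultimately have
    "bij_betw grafted (cells graft_shape \<union> end_cells)
      ({1..graft_size} \<union> {Suc graft_size..sum_list lam})"
    by (rule bij_betw_combine) auto
  moreover have "cells graft_shape \<union> end_cells = cells lam"
    using cells_graft_shape end_cells_subset by auto
  moreover have "{1..graft_size} \<union> {Suc graft_size..sum_list lam} = {1..sum_list lam}"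
    using sum_list_graft by auto
  ultimately show ?thesis by simp
qed

lemma extend_syt_row_less:
  assumes a: "(i, Suc j) \<in> cells lam"
  shows "grafted (i, j) < grafted (i, Suc j)"
proof (cases "(i, Suc j) \<in> cells graft_shape")
  case True
  then have "(i, j) \<in> cells graft_shape"
    using mem_cells_left[of i "Suc j" graft_shape j] by simp
  then show ?thesis using True syt_row[OF T'] extend_syt_old by simp
next
  case False
  then have "(i, Suc j) \<in> end_cells" using a cells_graft_shape by auto
  then have i: "i \<in> graft_ends" "Suc j = lam ! i - 1" using mem_end_cells_iff by blast+
  then have "(i, j) \<in> cells graft_shape"
    using a graft_rows_props(1) unfolding cells_def by auto
  then have "grafted (i, j) \<le> graft_size" using extend_syt_old graft_range_old by fastforce
  moreover have "grafted (i, Suc j) = Suc graft_size + rank_in graft_ends i"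
    using extend_syt_new[OF i(1)] i(2) by simp
  ultimately show ?thesis by simp
qed

lemma extend_syt_col_less:
  assumes a: "(Suc i, j) \<in> cells lam"
  shows "grafted (i, j) < grafted (Suc i, j)"
proof (cases "(Suc i, j) \<in> cells graft_shape")
  case True
  then have "(i, j) \<in> cells graft_shape"
    using mem_cells_above[OF graft_strip_props(3) True, of i] by simp
  then show ?thesis using True syt_col[OF T'] extend_syt_old by simp
next
  case False
  then have "(Suc i, j) \<in> end_cells" using a cells_graft_shape by auto
  then have i': "Suc i \<in> graft_ends" "j = lam ! Suc i - 1" using mem_end_cells_iff by blast+
  have new: "grafted (Suc i, j) = Suc graft_size + rank_in graft_ends (Suc i)"
    using extend_syt_new[OF i'(1)] i'(2) by simp
  show ?thesis
  proof (cases "(i, j) \<in> cells graft_shape")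
    case True
    then have "grafted (i, j) \<le> graft_size" using extend_syt_old graft_range_old by fastforce
    then show ?thesis using new by simp
  next
    case False
    moreover have "(i, j) \<in> cells lam" using mem_cells_above[OF noninc a, of i] by simp
    ultimately have "(i, j) \<in> end_cells" using cells_graft_shape by auto
    then have i: "i \<in> graft_ends" "j = lam ! i - 1" using mem_end_cells_iff by blast+
    have "grafted (i, j) = Suc graft_size + rank_in graft_ends i"
      using extend_syt_new[OF i(1)] i(2) by simp
    moreover have "rank_in graft_ends i < rank_in graft_ends (Suc i)"
      using rank_in_less[OF graft_strip_props(5) i(1) i'(1)] by simp
    ultimately show ?thesis using new by simp
  qed
qed

lemma extend_syt_in_syt: "grafted \<in> syt lam"
  unfolding syt_def
  by (intro CollectI conjI allI impI extend_syt_bij extend_syt_zero extend_syt_row_less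
    extend_syt_col_less)

lemma extend_syt_first_row_last: "grafted (0, m) = Suc graft_size"
  using extend_syt_new[of 0] first_len rank_in_0 by simp

lemma first_row_entries_extend_syt:
  "first_row_entries lam grafted = first_row_entries graft_shape T' \<union> {Suc graft_size}"
proof -
  have Z: "{c \<in> cells lam. fst c = 0} =
      {c \<in> cells graft_shape. fst c = 0} \<union> {(0, m)}"
    using ne first_len unfolding cells_def by auto
  have "first_row_entries lam grafted
      = grafted ` {c \<in> cells graft_shape. fst c = 0} \<union> {grafted (0, m)}"
    unfolding first_row_entries_def Z by simp
  also have "grafted ` {c \<in> cells graft_shape. fst c = 0} = first_row_entries graft_shape T'"
    unfolding first_row_entries_def
    using extend_syt_old by (intro image_cong) auto
  finally show ?thesis using extend_syt_first_row_last by simp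
qed

lemma row_of_extend_syt_old:
  "1 \<le> v \<Longrightarrow> v \<le> graft_size \<Longrightarrow>
    row_of lam grafted v = row_of graft_shape T' v"
proof -
  assume v: "1 \<le> v" "v \<le> graft_size"
  then have "v \<in> T' ` cells graft_shape" using syt_image[OF T'] by auto
  then obtain c where c: "c \<in> cells graft_shape" "T' c = v" by auto
  then have "c \<in> cells lam" using cells_graft_shape by auto
  then have "row_of lam grafted v = fst c"
    using row_of_syt[OF extend_syt_in_syt] extend_syt_old c by fastforce
  moreover have "row_of graft_shape T' v = fst c" using row_of_syt[OF T' c(1)] c by simp
  ultimately show ?thesis by simp
qed

lemma row_of_extend_syt_new:
  "i \<in> graft_ends \<Longrightarrow>
    row_of lam grafted (Suc graft_size + rank_in graft_ends i) = i"
proof -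
  assume i: "i \<in> graft_ends"
  then have "(i, lam ! i - 1) \<in> cells lam" using end_cells_subset by auto
  then show ?thesis using row_of_syt[OF extend_syt_in_syt] extend_syt_new[OF i] by fastforce
qed

text \<open>The added entries, all larger than those of \<open>T'\<close>, fill the ends of the chosen rows in
  increasing order.\<close>
lemma extend_syt_descent_new:
  assumes "Suc graft_size \<le> t" "t < sum_list lam"
  shows "row_of lam grafted t < row_of lam grafted (Suc t)"
proof -
  obtain k where k: "t = Suc graft_size + k" using assms(1) by (metis le_add_diff_inverse)
  have "Suc k < card graft_ends" using assms(2) k sum_list_graft by simp
  then have "k \<in> rank_in graft_ends ` graft_ends" "Suc k \<in> rank_in graft_ends ` graft_ends"
    using rank_in_image[OF graft_strip_props(5)] by auto
  then obtain i i' where i: "i \<in> graft_ends" "rank_in graft_ends i = k"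
    and i': "i' \<in> graft_ends" "rank_in graft_ends i' = Suc k"
    by (metis imageE)
  then have "i < i'" using rank_in_less_iff[OF graft_strip_props(5) i(1) i'(1)] by simp
  moreover have "row_of lam grafted t = i" using row_of_extend_syt_new[OF i(1)] i(2) k by simp
  moreover have "row_of lam grafted (Suc t) = i'"
    using row_of_extend_syt_new[OF i'(1)] i'(2) k by simp
  ultimately show ?thesis by simp
qed

lemma extend_syt_max_des: "des lam grafted = sum_list lam - hd lam"
proof -
  have "graft_shape \<noteq> []" using ne length_decr_parts by (metis length_0_conv)
  then have desc': "descents graft_shape T' = descent_candidates graft_shape T'"
    using descents_eq_candidates[OF graft_strip_props(3) T' _ max_des'] by simp
  have "descent_candidates lam grafted \<subseteq> descents lam grafted"
  proof
    fix t assume t: "t \<in> descent_candidates lam grafted"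
    then have t1: "1 \<le> t" "t < sum_list lam" "Suc t \<notin> first_row_entries lam grafted"
      unfolding descent_candidates_def by auto
    then have nN: "Suc t \<noteq> Suc graft_size" "Suc t \<notin> first_row_entries graft_shape T'"
      using first_row_entries_extend_syt by auto
    show "t \<in> descents lam grafted"
    proof (cases "Suc t \<le> graft_size")
      case True
      then have "t \<in> descent_candidates graft_shape T'"
        using t1 nN unfolding descent_candidates_def by auto
      then have "row_of graft_shape T' t < row_of graft_shape T' (Suc t)"
        using desc' unfolding descents_def by auto
      then show ?thesis using row_of_extend_syt_old[of t] row_of_extend_syt_old[of "Suc t"] True t1
        unfolding descents_def by auto
    next
      case False
      then show ?thesis using nN t1 extend_syt_descent_new unfolding descents_def by simp
    qed
  qed
  then show ?thesis using max_des_iff[OF noninc extend_syt_in_syt ne] by simp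
qed

lemma first_row_last_extend_syt:
  "first_row_last lam grafted = Suc graft_size"
    unfolding first_row_last_def using first_len extend_syt_first_row_last by simp

lemma late_rows_extend_syt: "late_rows lam grafted = R"
proof -
  have "{c \<in> cells lam. Suc graft_size < grafted c} = (\<lambda>i. (i, lam ! i - 1)) ` R"
  proof (intro equalityI subsetI)
    fix c assume c: "c \<in> {c \<in> cells lam. Suc graft_size < grafted c}"
    have "c \<notin> cells graft_shape"
    proof
      assume "c \<in> cells graft_shape"
      then have "grafted c \<le> graft_size" using extend_syt_old graft_range_old by fastforce
      then show False using c by simp
    qed
    then have "c \<in> end_cells" using c cells_graft_shape by auto
    then obtain i where i: "i \<in> graft_ends" "c = (i, lam ! i - 1)" by auto
    have "i \<noteq> 0"
    proof
      assume "i = 0"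
      then have "grafted c = Suc graft_size" using i extend_syt_first_row_last first_len by simp
      then show False using c by simp
    qed
    then show "c \<in> (\<lambda>i. (i, lam ! i - 1)) ` R" using i by auto
  next
    fix c assume "c \<in> (\<lambda>i. (i, lam ! i - 1)) ` R"
    then obtain i where i: "i \<in> R" "c = (i, lam ! i - 1)" by auto
    then have "0 < i" using graft_strip_props(4) by (cases i) auto
    then have "0 < rank_in graft_ends i" using rank_in_pos[OF _ graft_strip_props(5)] by simp
    moreover have "c \<in> cells lam" using i end_cells_subset by auto
    moreover have "grafted c = Suc graft_size + rank_in graft_ends i"
      using extend_syt_new[of i] i by simp
    ultimately show "c \<in> {c \<in> cells lam. Suc graft_size < grafted c}" by simp
  qed
  then show ?thesis unfolding late_rows_def first_row_last_extend_syt by (simp add: image_image)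
qed

lemma restrict_extend_syt: "restrict_syt lam R grafted = T'"
proof
  fix c show "restrict_syt lam R grafted c = T' c"
    unfolding restrict_syt_def using extend_syt_old syt_zero[OF T'] by auto
qed

end


section \<open>Maximal-descent tableaux and tail fillings\<close>

definition max_des_syt :: "nat list \<Rightarrow> (nat \<times> nat \<Rightarrow> nat) set" where
  "max_des_syt lam = {T \<in> syt lam. des lam T = sum_list lam - hd lam}"

lemma fpoly_max_des_syt:
  "fpoly lam (sum_list lam - hd lam) = (\<Sum>T\<in>max_des_syt lam. monom 1 (maj lam T))"
  unfolding fpoly_def max_des_syt_def by simp

lemma finite_max_des_syt: "finite (max_des_syt lam)"
  unfolding max_des_syt_def using finite_syt by simp

lemma finite_strips: "finite (strips lam)"
  unfolding strips_def by (rule finite_subset[of _ "Pow {1..<length lam}"]) auto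

context
  fixes lam :: "nat list" and m :: nat
  assumes noninc: "nonincreasing lam" and ne: "lam \<noteq> []" and first_len: "lam ! 0 = Suc m"
begin

lemma restrict_syt_bij:
  assumes R: "R \<in> strips lam"
  shows "bij_betw (restrict_syt lam R) {T \<in> max_des_syt lam. late_rows lam T = R}
    (max_des_syt (decr_parts lam (insert 0 R)))"
proof (rule bij_betw_byWitness[where f'="extend_syt lam R"])
  show "restrict_syt lam R ` {T \<in> max_des_syt lam. late_rows lam T = R}
      \<subseteq> max_des_syt (decr_parts lam (insert 0 R))"
    using restrict_syt_in_syt[OF noninc ne first_len] restrict_syt_max_des[OF noninc ne first_len]
    unfolding max_des_syt_def by auto
  show "extend_syt lam R ` max_des_syt (decr_parts lam (insert 0 R))
      \<subseteq> {T \<in> max_des_syt lam. late_rows lam T = R}"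
    using extend_syt_in_syt[OF noninc ne first_len R] extend_syt_max_des[OF noninc ne first_len R]
      late_rows_extend_syt[OF noninc ne first_len R]
    unfolding max_des_syt_def by auto
qed (use extend_restrict_syt[OF noninc ne first_len] restrict_extend_syt[OF noninc ne first_len R]
  in \<open>auto simp: max_des_syt_def\<close>)

lemma maj_restrict_syt_strip:
  assumes "T \<in> max_des_syt lam" and "late_rows lam T = R"
  shows "maj lam T = maj (decr_parts lam (insert 0 R)) (restrict_syt lam R T)
    + \<Sum>{sum_list lam - card R..<sum_list lam}"
proof -
  have T: "T \<in> syt lam" "des lam T = sum_list lam - hd lam"
    using assms(1) unfolding max_des_syt_def by auto
  then have "first_row_last lam T = sum_list lam - card R"
    using card_late_rows[OF noninc ne first_len T] first_row_last_range[OF noninc ne first_len T]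
      assms(2) by simp
  then show ?thesis using maj_restrict_syt[OF noninc ne first_len T] assms(2) by simp
qed

lemma fpoly_max_des_recursion:
  "fpoly lam (sum_list lam - hd lam) = (\<Sum>R\<in>strips lam.
     monom 1 (\<Sum>{sum_list lam - card R..<sum_list lam}) *
     fpoly (decr_parts lam (insert 0 R))
       (sum_list (decr_parts lam (insert 0 R)) - hd (decr_parts lam (insert 0 R))))"
proof -
  have "fpoly lam (sum_list lam - hd lam) = (\<Sum>R\<in>strips lam.
      \<Sum>T\<in>{T \<in> max_des_syt lam. late_rows lam T = R}. monom 1 (maj lam T))"
    unfolding fpoly_max_des_syt using late_rows_in_strips[OF noninc ne first_len]
    by (intro sum.group[symmetric] finite_max_des_syt finite_strips) (auto simp: max_des_syt_def)
  also have "\<dots> = (\<Sum>R\<in>strips lam.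
     monom 1 (\<Sum>{sum_list lam - card R..<sum_list lam}) *
     fpoly (decr_parts lam (insert 0 R))
       (sum_list (decr_parts lam (insert 0 R)) - hd (decr_parts lam (insert 0 R))))"
  proof (intro sum.cong refl)
    fix R assume R: "R \<in> strips lam"
    let ?lam' = "decr_parts lam (insert 0 R)" and ?S = "\<Sum>{sum_list lam - card R..<sum_list lam}"
    have "(\<Sum>T\<in>{T \<in> max_des_syt lam. late_rows lam T = R}. monom (1::rat) (maj lam T)) =
        monom 1 ?S * (\<Sum>T\<in>{T \<in> max_des_syt lam. late_rows lam T = R}.
          monom 1 (maj ?lam' (restrict_syt lam R T)))"
      unfolding sum_distrib_left
      by (intro sum.cong refl) (simp add: maj_restrict_syt_strip mult_monom add.commute)
    also have "\<dots> = monom 1 ?S * fpoly ?lam' (sum_list ?lam' - hd ?lam')"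
      unfolding fpoly_max_des_syt
      using sum.reindex_bij_betw[OF restrict_syt_bij[OF R], of "\<lambda>T'. monom 1 (maj ?lam' T')"]
        by simp
    finally show "(\<Sum>T\<in>{T \<in> max_des_syt lam. late_rows lam T = R}. monom 1 (maj lam T)) =
        monom 1 ?S * fpoly ?lam' (sum_list ?lam' - hd ?lam')" .
  qed
  finally show ?thesis .
qed

lemma strips_subset_tail_strips: "strips lam \<subseteq> tail_strips lam"
proof
  fix R assume "R \<in> strips lam"
  then have R: "R \<subseteq> {1..<length lam}" "\<forall>i\<in>R. 0 < lam ! i"
    and noninc': "nonincreasing (decr_parts lam (insert 0 R))"
    unfolding strips_def by auto
  have "decr_parts lam R ! Suc i \<le> decr_parts lam R ! i" if "1 \<le> i" "Suc i < length lam" for i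
    using noninc' that unfolding nonincreasing_def by (auto dest!: spec[of _ i])
  then show "R \<in> tail_strips lam" using R unfolding tail_strips_def tail_nonincreasing_def by auto
qed

text \<open>A tail strip that is not a strip would make the shortened first row shorter than the
  shortened second row; the second row then cannot be filled from \<open>{1..m}\<close>.\<close>
lemma tail_gf_eq_0_outside_strips:
  assumes "R \<in> tail_strips lam - strips lam"
  shows "tail_gf (decr_parts lam R) m = 0"
proof -
  have R: "R \<subseteq> {1..<length lam}" "\<forall>i\<in>R. 0 < lam ! i" "tail_nonincreasing (decr_parts lam R)"
    using assms unfolding tail_strips_def by auto
  then obtain i where i: "Suc i < length lam"
    "decr_parts lam (insert 0 R) ! i < decr_parts lam (insert 0 R) ! Suc i"
    using assms unfolding strips_def nonincreasing_def by auto
  have "i = 0"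
  proof (rule ccontr)
    assume "i \<noteq> 0"
    then have "decr_parts lam R ! Suc i \<le> decr_parts lam R ! i"
      using R(3) i(1) unfolding tail_nonincreasing_def by simp
    then show False using i \<open>i \<noteq> 0\<close> by simp
  qed
  then have "Suc 0 < length (decr_parts lam R)" "m < decr_parts lam R ! 1"
    using i ne first_len by auto
  then show ?thesis by (rule tail_gf_eq_0)
qed

end

lemma sum_upt_plus_choose2:
  "\<Sum>{d + m + 1..<d + m + 1 + k} + (d + 1 choose 2) = (d + 1 + k choose 2) + m * k"
proof (induction k)
  case (Suc k)
  have "(d + 1 + Suc k choose 2) = (d + 1 + k choose 2) + (d + 1 + k)"
    by (simp add: numeral_2_eq_2)
  then show ?case using Suc.IH by simp
qed simp

lemma max_des_exponent_step:
  assumes "nonincreasing lam" "lam \<noteq> []" "lam ! 0 = Suc m" "R \<in> strips lam"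
  defines "lam' \<equiv> decr_parts lam (insert 0 R)"
  shows "\<Sum>{sum_list lam - card R..<sum_list lam} + (sum_list lam' - hd lam' + 1 choose 2)
    = (sum_list lam - hd lam + 1 choose 2) + m * card R"
proof -
  have R: "R \<subseteq> {1..<length lam}" "\<forall>i\<in>R. 0 < lam ! i" "finite R"
    using assms(4) finite_subset unfolding strips_def by auto
  have "lam' \<noteq> []" using assms(2) unfolding lam'_def by (metis length_0_conv length_decr_parts)
  then have hd: "hd lam = Suc m" "hd lam' = m" "lam' ! 0 = m"
    using assms(2,3) unfolding lam'_def by (simp_all add: hd_conv_nth)
  have "sum_list lam = sum_list lam' + card (insert 0 R)"
    unfolding lam'_def using R assms(2,3) by (intro sum_list_decr_parts) auto
  moreover have "card (insert 0 R) = Suc (card R)" using R by (subst card_insert_disjoint) auto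
  moreover have "m \<le> sum_list lam'"
    using hd(3) member_le_sum_list[of "lam' ! 0" lam'] nth_mem[of 0 lam'] \<open>lam' \<noteq> []\<close> by simp
  ultimately have "sum_list lam' = (sum_list lam' - m) + m"
    "sum_list lam = (sum_list lam' - m) + m + 1 + card R" by simp_all
  then show ?thesis
    using sum_upt_plus_choose2[of "sum_list lam' - m" m "card R"] hd by (simp add: algebra_simps)
qed

lemma fpoly_max_des_eq_tail_gf_empty_first_row:
  assumes "nonincreasing lam" "lam \<noteq> []" "lam ! 0 = 0"
  shows "fpoly lam (sum_list lam - hd lam) =
    monom 1 ((sum_list lam - hd lam + 1) choose 2) * tail_gf lam (hd lam)"
proof -
  have zero: "\<forall>i<length lam. lam ! i = 0"
    using nonincreasing_nth_mono[OF assms(1), of 0] assms(3) by auto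
  then have n: "sum_list lam = 0" and hd: "hd lam = 0"
    using assms(2,3) by (simp_all add: sum_list_sum_nth hd_conv_nth)
  have "cells lam = {}" "tail_cells lam = {}" using zero unfolding cells_def tail_cells_def by auto
  then have "syt lam = {\<lambda>_. 0}" unfolding syt_def n by (auto simp: bij_betw_def)
  moreover have "des lam (\<lambda>_. 0) = 0" "maj lam (\<lambda>_. 0) = 0"
    unfolding des_def maj_def descents_def n by auto
  ultimately have "{T \<in> syt lam. des lam T = 0} = {\<lambda>_. 0}" by auto
  then have "fpoly lam 0 = 1"
    unfolding fpoly_def using \<open>maj lam (\<lambda>_. 0) = 0\<close> by (simp add: monom_0 one_pCons)
  then show ?thesis
    using \<open>tail_cells lam = {}\<close> unfolding n hd
    by (simp add: tail_gf_0 monom_0 one_pCons binomial_eq_0)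
qed

theorem fpoly_max_des_eq_tail_gf:
  "nonincreasing lam \<Longrightarrow> lam \<noteq> [] \<Longrightarrow> lam ! 0 = m \<Longrightarrow>
   fpoly lam (sum_list lam - hd lam)
     = monom 1 ((sum_list lam - hd lam + 1) choose 2) * tail_gf lam (hd lam)"
proof (induction m arbitrary: lam)
  case 0
  then show ?case by (rule fpoly_max_des_eq_tail_gf_empty_first_row)
next
  case (Suc m)
  note lam = Suc.prems
  let ?n = "sum_list lam"
  let ?c = "monom (1::rat) ((?n - hd lam + 1) choose 2)"
  have hd: "hd lam = Suc m" using lam(2,3) by (simp add: hd_conv_nth)
  have step: "monom 1 (\<Sum>{?n - card R..<?n}) * fpoly (decr_parts lam (insert 0 R))
      (sum_list (decr_parts lam (insert 0 R)) - hd (decr_parts lam (insert 0 R)))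
    = ?c * (monom 1 (m * card R) * tail_gf (decr_parts lam R) m)"
    if R: "R \<in> strips lam" for R
  proof -
    let ?lam' = "decr_parts lam (insert 0 R)"
    have "?lam' \<noteq> []" using lam(2) by (metis length_0_conv length_decr_parts)
    moreover from this have "nonincreasing ?lam'" "?lam' ! 0 = m" "hd ?lam' = m"
      using R lam by (auto simp: strips_def hd_conv_nth)
    moreover have "tail_gf ?lam' m = tail_gf (decr_parts lam R) m"
      by (rule tail_gf_cong) (auto simp: tail_cells_def)
    ultimately show ?thesis
      using Suc.IH[of ?lam'] max_des_exponent_step[OF lam R]
      by (simp add: mult_monom algebra_simps flip: mult.assoc)
  qed
  have "fpoly lam (?n - hd lam) =
      (\<Sum>R\<in>strips lam. ?c * (monom 1 (m * card R) * tail_gf (decr_parts lam R) m))"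
    unfolding fpoly_max_des_recursion[OF lam] using step by simp
  also have "\<dots> =
      (\<Sum>R\<in>tail_strips lam. ?c * (monom 1 (m * card R) * tail_gf (decr_parts lam R) m))"
    using strips_subset_tail_strips[OF lam] tail_gf_eq_0_outside_strips[OF lam]
    by (intro sum.mono_neutral_left finite_tail_strips) auto
  also have "\<dots> = ?c * tail_gf lam (Suc m)"
  proof -
    have "tail_nonincreasing lam"
      using lam(1) unfolding nonincreasing_def tail_nonincreasing_def by simp
    then show ?thesis by (simp add: tail_gf_Suc sum_distrib_left)
  qed
  finally show ?case using hd by simp
qed

theorem mainTheorem6:
  fixes lam :: "nat list" and n :: nat
  assumes "is_partition lam" and "sum_list lam = n" and "lam \<noteq> []" and "hd lam \<ge> 1"
  shows "fpoly lam (n - hd lam) =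
           monom 1 ((n - hd lam + 1) choose 2) *
           schur (conj_part (tl lam)) (hd lam) (\<lambda>a. monom (1::rat) (a - 1))
       \<and> fpoly lam (n - hd lam) =
           monom 1 ((n - hd lam + 1) choose 2) *
           (\<Sum>p | p permutes {2..length lam}. of_int (sign p) *
              (\<Prod>i \<in> {2..length lam}.
                 qbinom (int (hd lam)) (int (lam ! (i - 1)) - int i + int (p i)) *
                 monom 1 (binom2 (int (lam ! (i - 1)) - int i + int (p i)))))"
proof -
  have sorted: "sorted_wrt (\<ge>) lam"
    using assms(1) unfolding is_partition_def by (simp add: sorted_wrt_rev)
  then have noninc: "nonincreasing lam"
    unfolding nonincreasing_def by (simp add: sorted_wrt_iff_nth_less)
  then have "tail_nonincreasing lam"
    unfolding nonincreasing_def tail_nonincreasing_def by simp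
  have "fpoly lam (n - hd lam) = monom 1 ((n - hd lam + 1) choose 2) * tail_gf lam (hd lam)"
    using fpoly_max_des_eq_tail_gf[OF noninc assms(3) refl] assms(2) by simp
  moreover have "tail_gf lam (hd lam) = schur (conj_part (tl lam)) (hd lam) (\<lambda>a. monom 1 (a - 1))"
    using sorted by (intro schur_eq_tail_gf[symmetric]) (cases lam; simp)
  moreover have "tail_gf lam (hd lam) = jt_det (length lam) (part lam) (hd lam)"
    by (rule tail_gf_eq_jt_det) fact
  ultimately show ?thesis unfolding jt_det_def qelem_def part_def by simp
qed

end
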